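(* Under the assumptions (A1), (A2), (A3) below, with the notation of the context: (1) for every $\varphi\in C([-q,0],\mathbb R)$ and every $t>0$, $|x(\varphi)(t)-z_h(\varphi)([t]_h)|\to0$ as $h\to0$ (along $h=q/k$, $k\to\infty$); (2) for all sufficiently small $h=q/k$, the zero solution of the difference equation with variable delay $$\zeta_h(n+1)=\zeta_h(n)-\Big(\int_{nh}^{(n+1)h}a(s)\,ds\Big)\zeta_h(n-k_n),\quad n\ge0,\qquad \zeta_h(n)=\varphi(nh),\ n=-k,\dots,0,$$ is uniformly asymptotically stable. Assumptions: $q>0$, $a:[0,\infty)\to[0,\infty)$ continuous, $r:[0,\infty)\to[0,q]$ with $q=\sup_{t\ge0}r(t)$; (A1) the zero solution of $x'(t)=-a(t)x(t-r(t))$ is uniformly asymptotically stable; (A2) $\sup_{t\ge0}|a(t)|<\infty$; (A3) $r$ is uniformly continuous on $[0,\infty)$.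
   Context: $x(\varphi)$ is the solution of $x'(t)=-a(t)x(t-r(t))$, $t\ge0$, with $x=\varphi$ on $[-q,0]$. For $h=q/k$ ($k\ge1$ integer), $[s]_h=\lfloor s/h\rfloor h$, $k_n:=\lfloor r(nh)/h\rfloor\in\{0,\dots,k\}$, and $z_h(\varphi)$ is the continuous function on $[0,\infty)$ (with $z_h(nh)=\varphi(nh)$ for $n=-k,\dots,0$) satisfying $z_h'(t)=-a(t)z_h((i-k_i)h)$ on each $[ih,(i+1)h)$, $i\ge0$; the sequence $\zeta_h(n)=z_h(nh)$ is the solution of the displayed difference equation. The zero solution of the difference equation is uniformly asymptotically stable if it is uniformly stable (for every $\varepsilon>0$ there is $\delta>0$ such that initial data of sup-norm $<\delta$ at any initial time give solutions bounded by $\varepsilon$ afterwards) and uniformly attractive (solutions with small initial data tend to $0$ as $n\to\infty$ uniformly with respect to the initial time). *)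

theory Defs
  imports "HOL-Analysis.Analysis"
begin

definition dde_sol :: "(real \<Rightarrow> real) \<Rightarrow> (real \<Rightarrow> real) \<Rightarrow> real \<Rightarrow> real \<Rightarrow> (real \<Rightarrow> real) \<Rightarrow> bool" where
  "dde_sol a r q \<sigma> x \<longleftrightarrow>
     continuous_on {\<sigma> - q..} x \<and>
     (\<forall>t\<ge>\<sigma>. (x has_real_derivative (- a t * x (t - r t))) (at t within {\<sigma>..}))"

definition dde_UAS :: "(real \<Rightarrow> real) \<Rightarrow> (real \<Rightarrow> real) \<Rightarrow> real \<Rightarrow> bool" where
  "dde_UAS a r q \<longleftrightarrow>
     (\<forall>\<epsilon>>0. \<exists>\<delta>>0. \<forall>\<sigma>\<ge>0. \<forall>x. dde_sol a r q \<sigma> x \<and> (\<forall>\<theta>\<in>{\<sigma> - q..\<sigma>}. \<bar>x \<theta>\<bar> < \<delta>)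
        \<longrightarrow> (\<forall>t\<ge>\<sigma>. \<bar>x t\<bar> < \<epsilon>)) \<and>
     (\<exists>\<delta>0>0. \<forall>\<eta>>0. \<exists>T. \<forall>\<sigma>\<ge>0. \<forall>x. dde_sol a r q \<sigma> x \<and> (\<forall>\<theta>\<in>{\<sigma> - q..\<sigma>}. \<bar>x \<theta>\<bar> < \<delta>0)
        \<longrightarrow> (\<forall>t\<ge>\<sigma> + T. \<bar>x t\<bar> < \<eta>))"

definition grid_floor :: "real \<Rightarrow> real \<Rightarrow> real" where
  "grid_floor h s = of_int \<lfloor>s / h\<rfloor> * h"

definition kn :: "(real \<Rightarrow> real) \<Rightarrow> real \<Rightarrow> int \<Rightarrow> nat" where
  "kn r h n = nat \<lfloor>r (of_int n * h) / h\<rfloor>"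

definition dA :: "(real \<Rightarrow> real) \<Rightarrow> real \<Rightarrow> int \<Rightarrow> real" where
  "dA a h n = integral {of_int n * h .. of_int (n + 1) * h} a"

function zeta :: "(real \<Rightarrow> real) \<Rightarrow> (real \<Rightarrow> real) \<Rightarrow> real \<Rightarrow> (real \<Rightarrow> real) \<Rightarrow> int \<Rightarrow> real" where
  "zeta a r h \<phi> n =
     (if n \<le> 0 then \<phi> (of_int n * h)
      else zeta a r h \<phi> (n - 1) - dA a h (n - 1) * zeta a r h \<phi> (n - 1 - int (kn r h (n - 1))))"
  by pat_completeness auto
termination
  by (relation "Wellfounded.measure (\<lambda>(a, r, h, \<phi>, n). nat n)") auto

definition zh :: "(real \<Rightarrow> real) \<Rightarrow> (real \<Rightarrow> real) \<Rightarrow> real \<Rightarrow> (real \<Rightarrow> real) \<Rightarrow> real \<Rightarrow> real" where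
  "zh a r h \<phi> t =
     (let i = \<lfloor>t / h\<rfloor> in
        zeta a r h \<phi> i - integral {of_int i * h .. t} a * zeta a r h \<phi> (i - int (kn r h i)))"

definition diff_sol :: "(real \<Rightarrow> real) \<Rightarrow> (real \<Rightarrow> real) \<Rightarrow> real \<Rightarrow> int \<Rightarrow> (int \<Rightarrow> real) \<Rightarrow> bool" where
  "diff_sol a r h n0 \<zeta> \<longleftrightarrow>
     (\<forall>n\<ge>n0. \<zeta> (n + 1) = \<zeta> n - dA a h n * \<zeta> (n - int (kn r h n)))"

definition diff_UAS :: "(real \<Rightarrow> real) \<Rightarrow> (real \<Rightarrow> real) \<Rightarrow> real \<Rightarrow> nat \<Rightarrow> bool" where
  "diff_UAS a r h k \<longleftrightarrow>
     (\<forall>\<epsilon>>0. \<exists>\<delta>>0. \<forall>n0\<ge>0. \<forall>\<zeta>. diff_sol a r h n0 \<zeta> \<and> (\<forall>j\<in>{n0 - int k..n0}. \<bar>\<zeta> j\<bar> < \<delta>)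
        \<longrightarrow> (\<forall>n\<ge>n0. \<bar>\<zeta> n\<bar> < \<epsilon>)) \<and>
     (\<exists>\<delta>0>0. \<forall>\<eta>>0. \<exists>N::int. \<forall>n0\<ge>0. \<forall>\<zeta>. diff_sol a r h n0 \<zeta> \<and> (\<forall>j\<in>{n0 - int k..n0}. \<bar>\<zeta> j\<bar> < \<delta>0)
        \<longrightarrow> (\<forall>n\<ge>n0 + N. \<bar>\<zeta> n\<bar> < \<eta>))"

end

theory Submission
  imports Defs
begin

text \<open>
  Part (1): on each step the scheme replaces \<open>x (s - r s)\<close> by the grid value
  \<open>x ((n - k\<^sub>n) h)\<close>. By uniform continuity of \<open>r\<close> and of the solution the two differ by
  \<open>o(1)\<close> as \<open>h \<rightarrow> 0\<close>, and a discrete Gronwall estimate accumulates these local errors with a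
  factor at most \<open>exp (M t)\<close>, where \<open>M\<close> bounds \<open>a\<close>.

  Part (2): since the equation is linear, (A1) yields constants \<open>C\<close> and \<open>T\<close> such that
  solutions with initial data bounded by \<open>B\<close> stay below \<open>C B\<close> and fall below \<open>B / 4\<close> after
  time \<open>T\<close>. Over a block of about \<open>(T + 2 q) / h\<close> steps, compare a solution of the difference
  equation with the solution of the delay equation whose initial function interpolates its
  last \<open>k + 1\<close> values. That solution is Lipschitz, so for small \<open>h\<close> the discretisation error
  over the block is at most a quarter of the initial size: the difference equation halves
  from block to block, uniformly in the initial time. The comparison solutions exist by a
  Banach fixed point argument in an exponentially weighted sup norm.
\<close>

declare zeta.simps[simp del]

section \<open>Linear estimates from uniform asymptotic stability\<close>

lemma dde_sol_cmult:
  assumes "dde_sol a r q \<sigma> x"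
  shows "dde_sol a r q \<sigma> (\<lambda>t. c * x t)"
  unfolding dde_sol_def
proof (intro conjI allI impI)
  show "continuous_on {\<sigma> - q..} (\<lambda>t. c * x t)"
    using assms unfolding dde_sol_def by (intro continuous_intros) auto
  fix t assume "t \<ge> \<sigma>"
  then have "(x has_real_derivative (- a t * x (t - r t))) (at t within {\<sigma>..})"
    using assms unfolding dde_sol_def by auto
  from DERIV_cmult[OF this, of c]
  show "((\<lambda>t. c * x t) has_real_derivative (- a t * (c * x (t - r t)))) (at t within {\<sigma>..})"
    by (simp add: algebra_simps)
qed

lemma dde_sol_bound_by_scaling:
  assumes small: "\<And>y. dde_sol a r q \<sigma> y \<Longrightarrow> (\<forall>\<theta>\<in>{\<sigma> - q..\<sigma>}. \<bar>y \<theta>\<bar> < \<delta>) \<Longrightarrow> \<bar>y t\<bar> < \<epsilon>"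
    and \<delta>: "\<delta> > 0" and sol: "dde_sol a r q \<sigma> x" and B: "B > 0"
    and init: "\<forall>\<theta>\<in>{\<sigma> - q..\<sigma>}. \<bar>x \<theta>\<bar> \<le> B"
  shows "\<bar>x t\<bar> \<le> 2 * \<epsilon> / \<delta> * B"
proof -
  define c where "c = \<delta> / (2 * B)"
  have c: "c > 0" using \<delta> B c_def by simp
  have "\<forall>\<theta>\<in>{\<sigma> - q..\<sigma>}. \<bar>c * x \<theta>\<bar> < \<delta>"
  proof
    fix \<theta> assume "\<theta> \<in> {\<sigma> - q..\<sigma>}"
    then have "\<bar>c * x \<theta>\<bar> \<le> c * B" using init c by (simp add: abs_mult mult_left_mono)
    also have "c * B = \<delta> / 2" using B c_def by simp
    finally show "\<bar>c * x \<theta>\<bar> < \<delta>" using \<delta> by simp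
  qed
  then have "\<bar>c * x t\<bar> < \<epsilon>" using small[OF dde_sol_cmult[OF sol]] by blast
  then have "\<bar>x t\<bar> < \<epsilon> / c" using c by (simp add: abs_mult field_simps)
  also have "\<epsilon> / c = 2 * \<epsilon> / \<delta> * B" using B \<delta> c_def by simp
  finally show ?thesis by simp
qed

lemma dde_UAS_linear_bound:
  assumes "dde_UAS a r q"
  obtains C where "C \<ge> 1" and "\<And>\<sigma> x B t. \<sigma> \<ge> 0 \<Longrightarrow> dde_sol a r q \<sigma> x \<Longrightarrow> B > 0 \<Longrightarrow>
    \<forall>\<theta>\<in>{\<sigma> - q..\<sigma>}. \<bar>x \<theta>\<bar> \<le> B \<Longrightarrow> t \<ge> \<sigma> \<Longrightarrow> \<bar>x t\<bar> \<le> C * B"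
proof -
  obtain \<delta> where \<delta>: "\<delta> > 0" and stable: "\<forall>\<sigma>\<ge>0. \<forall>x. dde_sol a r q \<sigma> x \<and>
      (\<forall>\<theta>\<in>{\<sigma> - q..\<sigma>}. \<bar>x \<theta>\<bar> < \<delta>) \<longrightarrow> (\<forall>t\<ge>\<sigma>. \<bar>x t\<bar> < 1)"
    using assms unfolding dde_UAS_def by (meson zero_less_one)
  show ?thesis
  proof (rule that[of "max 1 (2 / \<delta>)"])
    fix \<sigma> x B t assume \<sigma>: "\<sigma> \<ge> 0" and sol: "dde_sol a r q \<sigma> x" and B: "B > 0"
      and init: "\<forall>\<theta>\<in>{\<sigma> - q..\<sigma>}. \<bar>x \<theta>\<bar> \<le> B" and t: "t \<ge> \<sigma>"
    have "\<bar>x t\<bar> \<le> 2 * 1 / \<delta> * B"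
      by (rule dde_sol_bound_by_scaling[OF _ \<delta> sol B init]) (use stable \<sigma> t in blast)
    also have "\<dots> \<le> max 1 (2 / \<delta>) * B" using B by (intro mult_right_mono) auto
    finally show "\<bar>x t\<bar> \<le> max 1 (2 / \<delta>) * B" .
  qed simp
qed

lemma dde_UAS_quarter_decay:
  assumes "dde_UAS a r q"
  obtains T where "T \<ge> 0" and "\<And>\<sigma> x B t. \<sigma> \<ge> 0 \<Longrightarrow> dde_sol a r q \<sigma> x \<Longrightarrow> B > 0 \<Longrightarrow>
    \<forall>\<theta>\<in>{\<sigma> - q..\<sigma>}. \<bar>x \<theta>\<bar> \<le> B \<Longrightarrow> t \<ge> \<sigma> + T \<Longrightarrow> \<bar>x t\<bar> \<le> B / 4"
proof -
  obtain \<delta> where \<delta>: "\<delta> > 0" and attr: "\<forall>\<eta>>0. \<exists>T. \<forall>\<sigma>\<ge>0. \<forall>x. dde_sol a r q \<sigma> x \<and>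
      (\<forall>\<theta>\<in>{\<sigma> - q..\<sigma>}. \<bar>x \<theta>\<bar> < \<delta>) \<longrightarrow> (\<forall>t\<ge>\<sigma> + T. \<bar>x t\<bar> < \<eta>)"
    using assms unfolding dde_UAS_def by blast
  obtain T where T: "\<forall>\<sigma>\<ge>0. \<forall>x. dde_sol a r q \<sigma> x \<and> (\<forall>\<theta>\<in>{\<sigma> - q..\<sigma>}. \<bar>x \<theta>\<bar> < \<delta>)
      \<longrightarrow> (\<forall>t\<ge>\<sigma> + T. \<bar>x t\<bar> < \<delta> / 8)"
    using attr \<delta> by (meson divide_pos_pos zero_less_numeral)
  show ?thesis
  proof (rule that[of "max T 0"])
    fix \<sigma> x B t assume \<sigma>: "\<sigma> \<ge> 0" and sol: "dde_sol a r q \<sigma> x" and B: "B > 0"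
      and init: "\<forall>\<theta>\<in>{\<sigma> - q..\<sigma>}. \<bar>x \<theta>\<bar> \<le> B" and t: "t \<ge> \<sigma> + max T 0"
    have "\<bar>x t\<bar> \<le> 2 * (\<delta> / 8) / \<delta> * B"
      by (rule dde_sol_bound_by_scaling[OF _ \<delta> sol B init]) (use T \<sigma> t in auto)
    then show "\<bar>x t\<bar> \<le> B / 4" using \<delta> by simp
  qed simp
qed

section \<open>Piecewise linear interpolation of sequences\<close>

lemma lipschitz_on_Un_at:
  fixes f :: "real \<Rightarrow> 'a::metric_space"
  assumes S: "L-lipschitz_on S f" and T: "L-lipschitz_on T f"
    and b: "b \<in> S" "b \<in> T" and ST: "S \<subseteq> {..b}" "T \<subseteq> {b..}"
  shows "L-lipschitz_on (S \<union> T) f"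
proof (rule lipschitz_on_leI)
  fix x y assume x: "x \<in> S \<union> T" and y: "y \<in> S \<union> T" and xy: "x \<le> y"
  consider "x \<in> S" "y \<in> S" | "x \<in> T" "y \<in> T" | "x \<in> S" "y \<in> T" | "x \<in> T" "y \<in> S"
    using x y by blast
  then show "dist (f x) (f y) \<le> L * dist x y"
  proof cases
    case 3
    have "dist (f x) (f y) \<le> dist (f x) (f b) + dist (f b) (f y)" by (rule dist_triangle)
    also have "\<dots> \<le> L * dist x b + L * dist b y"
      using 3 b by (intro add_mono lipschitz_onD[OF S] lipschitz_onD[OF T]) auto
    also have "\<dots> = L * (dist x b + dist b y)" by (simp add: algebra_simps)
    also have "dist x b + dist b y = dist x y"
    proof -
      have "x \<le> b" "b \<le> y" using 3 ST by auto
      then show ?thesis by (simp add: dist_real_def)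
    qed
    finally show ?thesis .
  next
    case 4
    then have "b \<le> x" "y \<le> b" using ST by auto
    then have "x = b" "y = b" using xy by linarith+
    then show ?thesis using lipschitz_on_nonneg[OF S] by simp
  qed (auto intro: lipschitz_onD[OF S] lipschitz_onD[OF T])
qed (rule lipschitz_on_nonneg[OF S])

definition grid_interp :: "real \<Rightarrow> (int \<Rightarrow> real) \<Rightarrow> real \<Rightarrow> real" where
  "grid_interp h \<zeta> t = (let i = \<lfloor>t / h\<rfloor> in \<zeta> i + (t / h - of_int i) * (\<zeta> (i + 1) - \<zeta> i))"

lemma grid_interp_on_cell:
  assumes h: "h > 0" and t: "of_int i * h \<le> t" "t \<le> of_int (i + 1) * h"
  shows "grid_interp h \<zeta> t = \<zeta> i + (t / h - of_int i) * (\<zeta> (i + 1) - \<zeta> i)"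
proof (cases "t = of_int (i + 1) * h")
  case True
  then have "\<lfloor>t / h\<rfloor> = i + 1" using h by simp
  then show ?thesis unfolding grid_interp_def Let_def using True h by simp
next
  case False
  then have "\<lfloor>t / h\<rfloor> = i" using t h by (simp add: floor_eq_iff field_simps)
  then show ?thesis unfolding grid_interp_def Let_def by simp
qed

lemma grid_interp_at_grid: "h > 0 \<Longrightarrow> grid_interp h \<zeta> (of_int j * h) = \<zeta> j"
  using grid_interp_on_cell[of h j "of_int j * h" \<zeta>] by simp

lemma grid_cell_containing:
  fixes h t :: real
  assumes h: "h > 0" and m: "m1 < m2" and t: "of_int m1 * h \<le> t" "t \<le> of_int m2 * h"
  obtains i where "m1 \<le> i" "i < m2" "of_int i * h \<le> t" "t \<le> of_int (i + 1) * h"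
proof -
  define f where "f = \<lfloor>t / h\<rfloor>"
  have "of_int f \<le> t / h" "t / h < of_int f + 1" unfolding f_def by linarith+
  then have f: "of_int f * h \<le> t" "t < (of_int f + 1) * h" using h by (simp_all add: field_simps)
  have "m1 \<le> f" using t h unfolding f_def by (simp add: le_floor_iff field_simps)
  show ?thesis
  proof (rule that[of "min f (m2 - 1)"])
    have "of_int (min f (m2 - 1)) * h \<le> of_int f * h" using h by (intro mult_right_mono) auto
    then show "of_int (min f (m2 - 1)) * h \<le> t" using f by linarith
    show "t \<le> of_int (min f (m2 - 1) + 1) * h"
      using f t by (cases "f \<le> m2 - 1") (auto simp: min_def)
  qed (use \<open>m1 \<le> f\<close> m in auto)
qed

lemma grid_interp_abs_le:
  assumes h: "h > 0" and m: "m1 < m2" and t: "of_int m1 * h \<le> t" "t \<le> of_int m2 * h"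
    and S: "\<And>j. m1 \<le> j \<Longrightarrow> j \<le> m2 \<Longrightarrow> \<bar>\<zeta> j\<bar> \<le> S"
  shows "\<bar>grid_interp h \<zeta> t\<bar> \<le> S"
proof -
  obtain i where i: "m1 \<le> i" "i < m2" "of_int i * h \<le> t" "t \<le> of_int (i + 1) * h"
    using grid_cell_containing[OF h m t] .
  define \<mu> where "\<mu> = t / h - of_int i"
  have \<mu>: "0 \<le> \<mu>" "\<mu> \<le> 1" using i h unfolding \<mu>_def by (simp_all add: field_simps)
  have "grid_interp h \<zeta> t = (1 - \<mu>) * \<zeta> i + \<mu> * \<zeta> (i + 1)"
    using grid_interp_on_cell[OF h i(3,4)] unfolding \<mu>_def by (simp add: algebra_simps)
  also have "\<bar>\<dots>\<bar> \<le> (1 - \<mu>) * S + \<mu> * S"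
    using S[of i] S[of "i + 1"] i \<mu>
    by (intro order.trans[OF abs_triangle_ineq] add_mono) (auto simp: abs_mult mult_left_mono)
  finally show ?thesis by (simp add: algebra_simps)
qed

lemma grid_interp_lipschitz_on_cell:
  assumes h: "h > 0" and \<Lambda>: "\<Lambda> \<ge> 0" and d: "\<bar>\<zeta> (i + 1) - \<zeta> i\<bar> \<le> \<Lambda> * h"
  shows "\<Lambda>-lipschitz_on {of_int i * h .. of_int (i + 1) * h} (grid_interp h \<zeta>)"
proof (rule lipschitz_onI[OF _ \<Lambda>])
  fix u v assume u: "u \<in> {of_int i * h .. of_int (i + 1) * h}"
    and v: "v \<in> {of_int i * h .. of_int (i + 1) * h}"
  have "grid_interp h \<zeta> u - grid_interp h \<zeta> v = (u - v) / h * (\<zeta> (i + 1) - \<zeta> i)"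
    using grid_interp_on_cell[OF h, of i u \<zeta>] grid_interp_on_cell[OF h, of i v \<zeta>] u v h
    by (simp add: field_simps)
  also have "\<bar>\<dots>\<bar> = \<bar>u - v\<bar> / h * \<bar>\<zeta> (i + 1) - \<zeta> i\<bar>"
    using h by (simp add: abs_mult)
  also have "\<dots> \<le> \<bar>u - v\<bar> / h * (\<Lambda> * h)"
    using d h by (intro mult_left_mono) auto
  finally show "dist (grid_interp h \<zeta> u) (grid_interp h \<zeta> v) \<le> \<Lambda> * dist u v"
    using h by (simp add: dist_real_def mult.commute)
qed

lemma grid_interp_lipschitz:
  assumes h: "h > 0" and \<Lambda>: "\<Lambda> \<ge> 0"
    and d: "\<And>j. m1 \<le> j \<Longrightarrow> j < m2 \<Longrightarrow> \<bar>\<zeta> (j + 1) - \<zeta> j\<bar> \<le> \<Lambda> * h"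
  shows "\<Lambda>-lipschitz_on {of_int m1 * h .. of_int m2 * h} (grid_interp h \<zeta>)"
proof (cases "m1 \<le> m2")
  case True
  have "\<Lambda>-lipschitz_on {of_int m1 * h .. of_int (m1 + int n) * h} (grid_interp h \<zeta>)"
    if "m1 + int n \<le> m2" for n
    using that
  proof (induction n)
    case 0
    then show ?case using \<Lambda> h by simp
  next
    case (Suc n)
    have left: "\<Lambda>-lipschitz_on {of_int m1 * h .. of_int (m1 + int n) * h} (grid_interp h \<zeta>)"
      using Suc by simp
    have right: "\<Lambda>-lipschitz_on {of_int (m1 + int n) * h .. of_int (m1 + int n + 1) * h} (grid_interp h \<zeta>)"
      by (rule grid_interp_lipschitz_on_cell[OF h \<Lambda>]) (use Suc.prems d in auto)
    have "\<Lambda>-lipschitz_on ({of_int m1 * h .. of_int (m1 + int n) * h} \<union>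
        {of_int (m1 + int n) * h .. of_int (m1 + int n + 1) * h}) (grid_interp h \<zeta>)"
    proof (rule lipschitz_on_Un_at[OF left right])
      show "of_int (m1 + int n) * h \<in> {of_int m1 * h .. of_int (m1 + int n) * h}"
        "of_int (m1 + int n) * h \<in> {of_int (m1 + int n) * h .. of_int (m1 + int n + 1) * h}"
        using h by (auto intro!: mult_right_mono)
    qed auto
    also have "{of_int m1 * h .. of_int (m1 + int n) * h} \<union>
        {of_int (m1 + int n) * h .. of_int (m1 + int n + 1) * h} = {of_int m1 * h .. of_int (m1 + int n + 1) * h}"
      using h by (intro ivl_disj_un_two_touch(4)) (auto intro!: mult_right_mono)
    finally show ?case by (simp add: add_ac)
  qed
  from this[of "nat (m2 - m1)"] True show ?thesis by simp
qed (use \<Lambda> h in simp)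

section \<open>Solutions of the delay equation\<close>

lemma exp_mult_has_integral:
  fixes L u v :: real
  assumes L: "L > 0" and uv: "u \<le> v"
  shows "((\<lambda>s. exp (L * s)) has_integral ((exp (L * v) - exp (L * u)) / L)) {u..v}"
proof -
  have "((\<lambda>s. exp (L * s)) has_integral (exp (L * v) / L - exp (L * u) / L)) {u..v}"
  proof (rule fundamental_theorem_of_calculus[OF uv])
    fix s assume "s \<in> {u..v}"
    have "((\<lambda>s. exp (L * s) / L) has_real_derivative exp (L * s)) (at s within {u..v})"
      using L by (auto intro!: derivative_eq_intros)
    then show "((\<lambda>s. exp (L * s) / L) has_vector_derivative exp (L * s)) (at s within {u..v})"
      by (simp add: has_real_derivative_iff_has_vector_derivative)
  qed
  then show ?thesis by (simp add: diff_divide_distrib)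
qed

lemma one_plus_power_le_exp:
  fixes x :: real
  assumes "x \<ge> 0"
  shows "(1 + x) ^ n \<le> exp (real n * x)"
proof -
  have "(1 + x) ^ n \<le> exp x ^ n" using assms by (intro power_mono) auto
  then show ?thesis by (simp add: exp_of_nat_mult)
qed

locale dde_setting =
  fixes a r :: "real \<Rightarrow> real" and q M :: real
  assumes q_pos: "q > 0" and a_cont: "continuous_on {0..} a"
    and a_nonneg: "\<And>t. t \<ge> 0 \<Longrightarrow> a t \<ge> 0"
    and a_le: "\<And>t. t \<ge> 0 \<Longrightarrow> a t \<le> M"
    and r_nonneg: "\<And>t. t \<ge> 0 \<Longrightarrow> 0 \<le> r t"
    and r_le: "\<And>t. t \<ge> 0 \<Longrightarrow> r t \<le> q"
    and r_uniformly_continuous: "uniformly_continuous_on {0..} r"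
begin

lemma M_nonneg: "0 \<le> M"
  using a_nonneg[of 0] a_le[of 0] by simp

lemma a_continuous_on: "\<sigma> \<ge> 0 \<Longrightarrow> continuous_on {\<sigma>..} a"
  by (rule continuous_on_subset[OF a_cont]) auto

lemma r_continuous_on: "\<sigma> \<ge> 0 \<Longrightarrow> continuous_on {\<sigma>..} r"
  by (rule continuous_on_subset[OF uniformly_continuous_imp_continuous[OF r_uniformly_continuous]]) auto

lemma a_integrable_on: "0 \<le> u \<Longrightarrow> a integrable_on {u..v}"
  by (rule integrable_continuous_real, rule continuous_on_subset[OF a_continuous_on]) auto

lemma kn_bounds:
  assumes h: "h > 0" and kh: "real k * h = q" and n: "n \<ge> 0"
  shows "kn r h n \<le> k" and "real (kn r h n) * h \<le> r (of_int n * h)"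
    and "r (of_int n * h) < (real (kn r h n) + 1) * h"
proof -
  have t: "of_int n * h \<ge> 0" using n h by simp
  define f where "f = \<lfloor>r (of_int n * h) / h\<rfloor>"
  have "f \<ge> 0" using r_nonneg[OF t] h by (simp add: f_def)
  then have kn: "real (kn r h n) = of_int f" by (simp add: kn_def f_def)
  have floor: "of_int f \<le> r (of_int n * h) / h" "r (of_int n * h) / h < of_int f + 1"
    unfolding f_def by linarith+
  then show "real (kn r h n) * h \<le> r (of_int n * h)"
    and "r (of_int n * h) < (real (kn r h n) + 1) * h"
    using h kn by (simp_all add: pos_le_divide_eq pos_divide_less_eq)
  have "r (of_int n * h) / h \<le> real k" using r_le[OF t] h kh by (simp add: pos_divide_le_eq)
  then show "kn r h n \<le> k" using floor kn by linarith
qed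

lemma dA_nonneg:
  assumes "h > 0" and "n \<ge> 0"
  shows "0 \<le> dA a h n"
proof -
  have u: "0 \<le> of_int n * h" using assms by simp
  show ?thesis
    unfolding dA_def by (rule integral_nonneg[OF a_integrable_on[OF u]]) (use u in \<open>auto intro!: a_nonneg\<close>)
qed

lemma dA_le:
  assumes h: "h > 0" and n: "n \<ge> 0"
  shows "dA a h n \<le> M * h"
proof -
  have u: "0 \<le> of_int n * h" using n h by simp
  have int: "(a has_integral dA a h n) {of_int n * h .. of_int (n + 1) * h}"
    unfolding dA_def using a_integrable_on[OF u] by (simp add: integrable_integral)
  have bound: "norm (a s) \<le> M" if "s \<in> {of_int n * h .. of_int (n + 1) * h} - {}" for s
    using that u a_nonneg a_le by (auto intro!: order.trans[OF _ u])
  have "norm (dA a h n) \<le> M * (of_int (n + 1) * h - of_int n * h)"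
    using has_integral_bound_real[OF M_nonneg finite.emptyI int bound] h by simp
  then show ?thesis by (simp add: algebra_simps)
qed

lemma dde_sol_has_integral:
  assumes sol: "dde_sol a r q \<sigma> x" and uv: "\<sigma> \<le> u" "u \<le> v"
  shows "((\<lambda>s. a s * x (s - r s)) has_integral (x u - x v)) {u..v}"
proof -
  have "((\<lambda>s. - (a s * x (s - r s))) has_integral (x v - x u)) {u..v}"
  proof (rule fundamental_theorem_of_calculus[OF uv(2)])
    fix s assume s: "s \<in> {u..v}"
    have "(x has_real_derivative (- a s * x (s - r s))) (at s within {\<sigma>..})"
      using sol s uv unfolding dde_sol_def by auto
    then have "(x has_real_derivative (- a s * x (s - r s))) (at s within {u..v})"
      by (rule has_field_derivative_subset) (use uv in auto)
    then show "(x has_vector_derivative - (a s * x (s - r s))) (at s within {u..v})"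
      by (simp add: has_real_derivative_iff_has_vector_derivative)
  qed
  from has_integral_neg[OF this] show ?thesis by simp
qed

lemma dde_sol_lipschitz:
  assumes sol: "dde_sol a r q \<sigma> x" and \<sigma>: "\<sigma> \<ge> 0"
    and B: "\<And>t. t \<ge> \<sigma> - q \<Longrightarrow> \<bar>x t\<bar> \<le> B"
  shows "(M * B)-lipschitz_on {\<sigma>..} x"
proof (rule lipschitz_on_leI)
  have B0: "B \<ge> 0" using B[of \<sigma>] q_pos by auto
  then show "0 \<le> M * B" using M_nonneg by simp
  fix u v assume u: "u \<in> {\<sigma>..}" and v: "v \<in> {\<sigma>..}" and uv: "u \<le> v"
  have "norm (a s * x (s - r s)) \<le> M * B" if s: "s \<in> {u..v} - {}" for s
  proof -
    have s0: "s \<ge> 0" using s u \<sigma> by auto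
    have "\<bar>x (s - r s)\<bar> \<le> B" using B r_le[OF s0] s u by auto
    then show ?thesis using a_nonneg[OF s0] a_le[OF s0] B0 by (simp add: abs_mult mult_mono)
  qed
  then have "norm (x u - x v) \<le> M * B * (v - u)"
    using has_integral_bound_real[OF mult_nonneg_nonneg[OF M_nonneg B0] finite.emptyI
        dde_sol_has_integral[OF sol _ uv]] u uv by simp
  then show "dist (x u) (x v) \<le> M * B * dist u v"
    using uv by (simp add: dist_real_def abs_minus_commute)
qed

lemma dde_sol_lipschitz_with_window:
  assumes sol: "dde_sol a r q \<sigma> x" and \<sigma>: "\<sigma> \<ge> 0"
    and B: "\<And>t. t \<ge> \<sigma> - q \<Longrightarrow> \<bar>x t\<bar> \<le> B"
    and window: "\<Lambda>-lipschitz_on {\<sigma> - q..\<sigma>} x" and \<Lambda>: "\<Lambda> \<le> M * B"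
  shows "(M * B)-lipschitz_on {\<sigma> - q..} x"
proof -
  have "(M * B)-lipschitz_on ({\<sigma> - q..\<sigma>} \<union> {\<sigma>..}) x"
    by (rule lipschitz_on_Un_at[where b = \<sigma>, OF lipschitz_on_le[OF window \<Lambda>] dde_sol_lipschitz[OF sol \<sigma> B]])
      (use q_pos in auto)
  moreover have "{\<sigma> - q..\<sigma>} \<union> {\<sigma>..} = {\<sigma> - q..}" using q_pos by auto
  ultimately show ?thesis by simp
qed

lemma delay_continuous_on:
  assumes \<sigma>: "\<sigma> \<ge> 0" and w: "continuous_on {\<sigma> - q..} w"
  shows "continuous_on {\<sigma>..} (\<lambda>s. w (s - r s))"
proof (rule continuous_on_compose2[OF w])
  show "continuous_on {\<sigma>..} (\<lambda>s. s - r s)"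
    by (intro continuous_intros r_continuous_on \<sigma>)
  show "(\<lambda>s. s - r s) ` {\<sigma>..} \<subseteq> {\<sigma> - q..}"
  proof (clarsimp)
    fix s assume "\<sigma> \<le> s"
    then show "\<sigma> - q \<le> s - r s" using r_le[of s] \<sigma> by simp
  qed
qed

lemma dde_sol_of_integral_equation:
  assumes \<sigma>: "\<sigma> \<ge> 0" and cont: "continuous_on {\<sigma> - q..} x"
    and eq: "\<And>t. t \<ge> \<sigma> \<Longrightarrow> x t = x \<sigma> - integral {\<sigma>..t} (\<lambda>s. a s * x (s - r s))"
  shows "dde_sol a r q \<sigma> x"
  unfolding dde_sol_def
proof (intro conjI allI impI cont)
  fix t assume t: "t \<ge> \<sigma>"
  have g: "continuous_on {\<sigma>..} (\<lambda>s. a s * x (s - r s))"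
    by (intro continuous_intros a_continuous_on delay_continuous_on cont \<sigma>)
  have "((\<lambda>v. integral {\<sigma>..v} (\<lambda>s. a s * x (s - r s))) has_real_derivative (a t * x (t - r t)))
      (at t within {\<sigma>..t + 1})"
    by (rule integral_has_real_derivative) (use t in \<open>auto intro: continuous_on_subset[OF g]\<close>)
  then have "((\<lambda>v. x \<sigma> - integral {\<sigma>..v} (\<lambda>s. a s * x (s - r s))) has_real_derivative
      (0 - a t * x (t - r t))) (at t within {\<sigma>..t + 1})"
    by (intro DERIV_diff DERIV_const)
  moreover have "at t within {\<sigma>..t + 1} = at t within {\<sigma>..}"
    by (rule at_within_nhd[where S="{t - 1 <..< t + 1}"]) (use t in auto)
  ultimately have "((\<lambda>v. x \<sigma> - integral {\<sigma>..v} (\<lambda>s. a s * x (s - r s))) has_real_derivative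
      (- a t * x (t - r t))) (at t within {\<sigma>..})"
    by simp
  then show "(x has_real_derivative (- a t * x (t - r t))) (at t within {\<sigma>..})"
    by (rule has_field_derivative_transform_within[where d=1])
      (use t eq[symmetric] in auto)
qed

lemma weighted_delay_integrable:
  assumes \<sigma>: "\<sigma> \<ge> 0" and w: "continuous_on {\<sigma> - q..} w"
  shows "(\<lambda>s. a s * exp (L * (s - r s)) * w (s - r s)) integrable_on {\<sigma>..v}"
proof -
  have "continuous_on {\<sigma>..} (\<lambda>s. a s * exp (L * (s - r s)) * w (s - r s))"
    by (intro continuous_intros a_continuous_on r_continuous_on delay_continuous_on w \<sigma>)
  then show ?thesis
    by (rule integrable_continuous_real[OF continuous_on_subset]) auto
qed

lemma weighted_delay_integral_bound:
  assumes \<sigma>: "\<sigma> \<ge> 0" and L: "L > 0" and w: "continuous_on {\<sigma> - q..} w"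
    and B: "\<And>t. t \<ge> \<sigma> - q \<Longrightarrow> \<bar>w t\<bar> \<le> B"
  shows "\<bar>exp (- L * t) * integral {\<sigma>..max t \<sigma>} (\<lambda>s. a s * exp (L * (s - r s)) * w (s - r s))\<bar>
    \<le> M * B / L"
proof (cases "t \<le> \<sigma>")
  case True
  have "B \<ge> 0" using B[of \<sigma>] q_pos by auto
  then show ?thesis using True M_nonneg L by (simp add: max_def)
next
  case False
  then have t: "\<sigma> \<le> t" "max t \<sigma> = t" by auto
  have B0: "B \<ge> 0" using B[of \<sigma>] q_pos by auto
  have exp_int: "((\<lambda>s. M * B * exp (L * s)) has_integral M * B * ((exp (L * t) - exp (L * \<sigma>)) / L)) {\<sigma>..t}"
    by (rule has_integral_mult_right[OF exp_mult_has_integral[OF L t(1)]])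
  have "\<bar>integral {\<sigma>..t} (\<lambda>s. a s * exp (L * (s - r s)) * w (s - r s))\<bar>
      \<le> integral {\<sigma>..t} (\<lambda>s. M * B * exp (L * s))"
    unfolding real_norm_def[symmetric]
  proof (rule integral_norm_bound_integral[OF weighted_delay_integrable[OF \<sigma> w]])
    show "(\<lambda>s. M * B * exp (L * s)) integrable_on {\<sigma>..t}" using exp_int by blast
    fix s assume s: "s \<in> {\<sigma>..t}"
    then have s0: "s \<ge> 0" using \<sigma> by auto
    have "norm (a s * exp (L * (s - r s)) * w (s - r s)) = a s * exp (L * (s - r s)) * \<bar>w (s - r s)\<bar>"
      using a_nonneg[OF s0] by (simp add: abs_mult)
    also have "\<dots> \<le> M * exp (L * s) * B"
      using a_nonneg[OF s0] a_le[OF s0] r_nonneg[OF s0] B r_le[OF s0] s L M_nonneg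
      by (intro mult_mono) auto
    finally show "norm (a s * exp (L * (s - r s)) * w (s - r s)) \<le> M * B * exp (L * s)"
      by (simp add: algebra_simps)
  qed
  also have "\<dots> = M * B * ((exp (L * t) - exp (L * \<sigma>)) / L)" using exp_int by (rule integral_unique)
  also have "\<dots> \<le> M * B * exp (L * t) / L"
    using M_nonneg B0 L by (simp add: divide_right_mono mult_left_mono)
  finally have "exp (- L * t) * \<bar>integral {\<sigma>..t} (\<lambda>s. a s * exp (L * (s - r s)) * w (s - r s))\<bar>
      \<le> exp (- L * t) * (M * B * exp (L * t) / L)"
    by (rule mult_left_mono) simp
  also have "\<dots> = M * B / L" by (simp add: exp_minus field_simps)
  finally show ?thesis using t by (simp add: abs_mult)
qed

text \<open>Picard operator for the equation with initial function \<open>\<psi>\<close> on \<open>[\<sigma> - q, \<sigma>]\<close>, written for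
  \<open>y t = exp (- L t) x t\<close> and extended to all of \<open>\<real>\<close> by clamping \<open>t\<close> to \<open>[\<sigma> - q, \<infinity>)\<close>.
  The exponential weight makes it a contraction with constant \<open>M / L\<close> in the sup norm.\<close>

definition delay_picard :: "real \<Rightarrow> real \<Rightarrow> (real \<Rightarrow> real) \<Rightarrow> (real \<Rightarrow> real) \<Rightarrow> real \<Rightarrow> real" where
  "delay_picard L \<sigma> \<psi> y t = exp (- L * max t (\<sigma> - q)) *
     (\<psi> (min (max t (\<sigma> - q)) \<sigma>) - integral {\<sigma>..max t \<sigma>} (\<lambda>s. a s * exp (L * (s - r s)) * y (s - r s)))"

lemma delay_picard_in_bcontfun:
  assumes \<sigma>: "\<sigma> \<ge> 0" and L: "L > 0" and \<psi>: "continuous_on {\<sigma> - q..\<sigma>} \<psi>"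
  shows "delay_picard L \<sigma> \<psi> (apply_bcontfun y) \<in> bcontfun"
proof -
  let ?G = "\<lambda>s. a s * exp (L * (s - r s)) * apply_bcontfun y (s - r s)"
  have y: "continuous_on {\<sigma> - q..} (apply_bcontfun y)" by simp
  \<comment> \<open>on \<open>{..<b}\<close> the integral ranges over the compact interval \<open>[\<sigma>, b]\<close>\<close>
  have "continuous_on {..<b} (delay_picard L \<sigma> \<psi> (apply_bcontfun y))" if b: "b > \<sigma>" for b
  proof -
    have "continuous_on {..<b} (\<lambda>t. \<psi> (min (max t (\<sigma> - q)) \<sigma>))"
      by (rule continuous_on_compose2[OF \<psi>]) (use q_pos in \<open>auto intro!: continuous_intros\<close>)
    moreover have "continuous_on {\<sigma>..b} (\<lambda>v. integral {\<sigma>..v} ?G)"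
      by (rule indefinite_integral_continuous_1[OF weighted_delay_integrable[OF \<sigma> y]])
    then have "continuous_on {..<b} (\<lambda>t. integral {\<sigma>..max t \<sigma>} ?G)"
      by (rule continuous_on_compose2) (use b in \<open>auto intro!: continuous_intros\<close>)
    ultimately show ?thesis
      unfolding delay_picard_def by (intro continuous_intros) auto
  qed
  then have "continuous_on (\<Union>b\<in>{\<sigma><..}. {..<b}) (delay_picard L \<sigma> \<psi> (apply_bcontfun y))"
    by (intro continuous_on_open_UN) auto
  moreover have "t \<in> (\<Union>b\<in>{\<sigma><..}. {..<b})" for t
    by (rule UN_I[of "max t \<sigma> + 1"]) auto
  then have "(\<Union>b\<in>{\<sigma><..}. {..<b}) = UNIV" by blast
  ultimately have cont: "continuous_on UNIV (delay_picard L \<sigma> \<psi> (apply_bcontfun y))" by simp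
  obtain B\<psi> where B\<psi>: "\<And>\<theta>. \<theta> \<in> {\<sigma> - q..\<sigma>} \<Longrightarrow> \<bar>\<psi> \<theta>\<bar> \<le> B\<psi>"
    using compact_imp_bounded[OF compact_continuous_image[OF \<psi> compact_Icc]]
    unfolding bounded_iff by (auto simp del: atLeastAtMost_iff)
  have "\<bar>delay_picard L \<sigma> \<psi> (apply_bcontfun y) t\<bar> \<le> exp (- L * (\<sigma> - q)) * B\<psi> + M * norm y / L" for t
  proof -
    let ?u = "max t (\<sigma> - q)"
    have "exp (- L * ?u) \<le> exp (- L * (\<sigma> - q))" using L by simp
    moreover have "\<bar>\<psi> (min ?u \<sigma>)\<bar> \<le> B\<psi>" using B\<psi> q_pos by (auto simp: min_def)
    ultimately have "\<bar>exp (- L * ?u) * \<psi> (min ?u \<sigma>)\<bar> \<le> exp (- L * (\<sigma> - q)) * B\<psi>"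
      by (simp add: abs_mult mult_mono)
    moreover have "max ?u \<sigma> = max t \<sigma>" using q_pos by auto
    then have "\<bar>exp (- L * ?u) * integral {\<sigma>..max t \<sigma>} ?G\<bar> \<le> M * norm y / L"
      using weighted_delay_integral_bound[OF \<sigma> L y, of "norm y" ?u]
      by (simp add: norm_bounded[of y, simplified real_norm_def])
    ultimately show ?thesis
      unfolding delay_picard_def by (smt (verit) right_diff_distrib abs_triangle_ineq4)
  qed
  then have "bounded (range (delay_picard L \<sigma> \<psi> (apply_bcontfun y)))"
    by (intro boundedI) auto
  with cont show ?thesis unfolding bcontfun_def by simp
qed

lemma delay_picard_dist:
  assumes \<sigma>: "\<sigma> \<ge> 0" and L: "L > 0"
  shows "dist (delay_picard L \<sigma> \<psi> (apply_bcontfun y1) t) (delay_picard L \<sigma> \<psi> (apply_bcontfun y2) t)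
    \<le> M * dist y1 y2 / L"
proof -
  define w where "w = (\<lambda>z. apply_bcontfun y1 z - apply_bcontfun y2 z)"
  let ?G = "\<lambda>y s. a s * exp (L * (s - r s)) * y (s - r s)"
  let ?u = "max t (\<sigma> - q)"
  have w: "continuous_on {\<sigma> - q..} w" unfolding w_def by (intro continuous_intros) auto
  have "integral {\<sigma>..max t \<sigma>} (?G (apply_bcontfun y1)) - integral {\<sigma>..max t \<sigma>} (?G (apply_bcontfun y2))
      = integral {\<sigma>..max t \<sigma>} (?G w)"
    by (subst integral_diff[OF weighted_delay_integrable[OF \<sigma>] weighted_delay_integrable[OF \<sigma>], symmetric])
      (simp_all add: w_def algebra_simps)
  moreover have "max ?u \<sigma> = max t \<sigma>" using q_pos by auto
  then have "\<bar>exp (- L * ?u) * integral {\<sigma>..max t \<sigma>} (?G w)\<bar> \<le> M * dist y1 y2 / L"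
    using weighted_delay_integral_bound[OF \<sigma> L w, of "dist y1 y2" ?u] dist_bounded[of y1 _ y2]
    by (simp add: w_def dist_real_def)
  ultimately show ?thesis
    unfolding delay_picard_def dist_real_def by (simp add: algebra_simps abs_minus_commute)
qed

lemma dde_sol_exists:
  assumes \<sigma>: "\<sigma> \<ge> 0" and \<psi>: "continuous_on {\<sigma> - q..\<sigma>} \<psi>"
  obtains x where "dde_sol a r q \<sigma> x" and "\<And>\<theta>. \<theta> \<in> {\<sigma> - q..\<sigma>} \<Longrightarrow> x \<theta> = \<psi> \<theta>"
proof -
  define L where "L = 2 * M + 1"
  have L: "L > 0" using M_nonneg L_def by simp
  define \<Phi> where "\<Phi> = (\<lambda>y. Bcontfun (delay_picard L \<sigma> \<psi> (apply_bcontfun y)))"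
  have \<Phi>: "apply_bcontfun (\<Phi> y) = delay_picard L \<sigma> \<psi> (apply_bcontfun y)" for y
    unfolding \<Phi>_def using delay_picard_in_bcontfun[OF \<sigma> L \<psi>] Bcontfun_inverse by blast
  have "dist (\<Phi> y1) (\<Phi> y2) \<le> M / L * dist y1 y2" for y1 y2
    by (rule dist_bound) (simp add: \<Phi> delay_picard_dist[OF \<sigma> L])
  moreover have "0 \<le> M / L" "M / L < 1" using L M_nonneg L_def by simp_all
  ultimately obtain y where fixed: "\<Phi> y = y" using banach_fix_type by metis
  define x where "x = (\<lambda>t. exp (L * t) * apply_bcontfun y t)"
  have y_eq: "apply_bcontfun y t = delay_picard L \<sigma> \<psi> (apply_bcontfun y) t" for t
    using fixed \<Phi> by metis
  have unweight: "exp (L * t) * exp (- L * t) = 1" for t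
    by (simp flip: exp_add)
  have "x \<theta> = \<psi> \<theta>" if "\<theta> \<in> {\<sigma> - q..\<sigma>}" for \<theta>
  proof -
    have "max \<theta> (\<sigma> - q) = \<theta>" "min \<theta> \<sigma> = \<theta>" "max \<theta> \<sigma> = \<sigma>" using that by auto
    then show ?thesis
      using y_eq[of \<theta>] unweight[of \<theta>] unfolding x_def delay_picard_def by (simp flip: mult.assoc)
  qed
  moreover have "dde_sol a r q \<sigma> x"
  proof (rule dde_sol_of_integral_equation[OF \<sigma>])
    show "continuous_on {\<sigma> - q..} x" unfolding x_def by (intro continuous_intros) auto
    have x\<sigma>: "x \<sigma> = \<psi> \<sigma>"
      using y_eq[of \<sigma>] unweight[of \<sigma>] q_pos unfolding x_def delay_picard_def by (simp flip: mult.assoc)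
    fix t assume "t \<ge> \<sigma>"
    then have "max t (\<sigma> - q) = t" "min t \<sigma> = \<sigma>" "max t \<sigma> = t" using q_pos by auto
    then have "x t = \<psi> \<sigma> - integral {\<sigma>..t} (\<lambda>s. a s * exp (L * (s - r s)) * apply_bcontfun y (s - r s))"
      using y_eq[of t] unweight[of t] unfolding x_def delay_picard_def by (simp flip: mult.assoc)
    then show "x t = x \<sigma> - integral {\<sigma>..t} (\<lambda>s. a s * x (s - r s))"
      unfolding x\<sigma> by (simp add: x_def mult_ac)
  qed
  ultimately show ?thesis using that by blast
qed

section \<open>Discretisation error\<close>

lemma zeta_step: "n \<ge> 0 \<Longrightarrow> zeta a r h \<phi> (n + 1) = zeta a r h \<phi> n - dA a h n * zeta a r h \<phi> (n - int (kn r h n))"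
  by (subst zeta.simps) simp

lemma zeta_initial: "n \<le> 0 \<Longrightarrow> zeta a r h \<phi> n = \<phi> (of_int n * h)"
  by (subst zeta.simps) simp

lemma delayed_grid_point_bounds:
  assumes h: "h > 0" and kh: "real k * h = q" and n: "n \<ge> 0"
  shows "of_int n * h - q \<le> of_int (n - int (kn r h n)) * h"
    and "of_int (n - int (kn r h n)) * h \<le> of_int n * h"
proof -
  have "real (kn r h n) * h \<le> real k * h" using kn_bounds(1)[OF h kh n] h by simp
  then show "of_int n * h - q \<le> of_int (n - int (kn r h n)) * h" using kh by (simp add: algebra_simps)
  show "of_int (n - int (kn r h n)) * h \<le> of_int n * h" using h by (simp add: algebra_simps)
qed

lemma delay_grid_approx:
  assumes h: "h > 0" and kh: "real k * h = q" and n: "n \<ge> 0"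
    and s: "of_int n * h \<le> s" "s \<le> of_int (n + 1) * h"
    and w: "\<bar>r s - r (of_int n * h)\<bar> \<le> w"
  shows "\<bar>(s - r s) - of_int (n - int (kn r h n)) * h\<bar> \<le> 2 * h + w"
    and "of_int n * h - q \<le> s - r s" and "s - r s \<le> s"
proof -
  have s0: "s \<ge> 0" using s n h by (smt (verit) mult_nonneg_nonneg of_int_0_le_iff)
  have "real (kn r h n) * h \<le> r (of_int n * h)" "r (of_int n * h) < (real (kn r h n) + 1) * h"
    using kn_bounds(2,3)[OF h kh n] by auto
  then show "\<bar>(s - r s) - of_int (n - int (kn r h n)) * h\<bar> \<le> 2 * h + w"
    using s w by (simp add: algebra_simps abs_le_iff)
  show "of_int n * h - q \<le> s - r s" "s - r s \<le> s" using r_le[OF s0] r_nonneg[OF s0] s by auto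
qed

lemma local_step_error:
  assumes h: "h > 0" and n: "n \<ge> 0" and sol: "dde_sol a r q \<sigma> x" and \<sigma>: "\<sigma> \<le> of_int n * h"
    and \<rho>: "\<rho> \<ge> 0"
    and mismatch: "\<And>s. of_int n * h \<le> s \<Longrightarrow> s \<le> of_int (n + 1) * h \<Longrightarrow> \<bar>x (s - r s) - c\<bar> \<le> \<rho>"
  shows "\<bar>x (of_int (n + 1) * h) - (x (of_int n * h) - dA a h n * c)\<bar> \<le> M * \<rho> * h"
proof -
  have u: "0 \<le> of_int n * h" using n h by simp
  have step: "of_int n * h \<le> of_int (n + 1) * h" using h by simp
  have "(a has_integral dA a h n) {of_int n * h .. of_int (n + 1) * h}"
    unfolding dA_def using a_integrable_on[OF u] by (simp add: integrable_integral)
  from has_integral_diff[OF dde_sol_has_integral[OF sol \<sigma> step] has_integral_mult_right[OF this, of c]]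
  have int: "((\<lambda>s. a s * x (s - r s) - c * a s) has_integral
      (x (of_int n * h) - x (of_int (n + 1) * h) - c * dA a h n)) {of_int n * h .. of_int (n + 1) * h}" .
  have "norm (a s * x (s - r s) - c * a s) \<le> M * \<rho>"
    if s: "s \<in> {of_int n * h .. of_int (n + 1) * h} - {}" for s
  proof -
    have s0: "s \<ge> 0" using s u by auto
    have "a s * x (s - r s) - c * a s = a s * (x (s - r s) - c)" by (simp add: algebra_simps)
    then have "norm (a s * x (s - r s) - c * a s) = a s * \<bar>x (s - r s) - c\<bar>"
      using a_nonneg[OF s0] by (simp add: abs_mult)
    also have "\<dots> \<le> M * \<rho>"
      using mismatch s a_nonneg[OF s0] a_le[OF s0] \<rho> by (intro mult_mono) auto
    finally show ?thesis .
  qed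
  from has_integral_bound_real[OF mult_nonneg_nonneg[OF M_nonneg \<rho>] finite.emptyI int this]
  show ?thesis using h by (simp add: algebra_simps abs_minus_commute)
qed

lemma discretisation_error:
  assumes h: "h > 0" and kh: "real k * h = q" and m: "m \<ge> 0"
    and sol: "dde_sol a r q (of_int m * h) x"
    and rec: "\<And>n. n \<ge> m \<Longrightarrow> \<zeta> (n + 1) = \<zeta> n - dA a h n * \<zeta> (n - int (kn r h n))"
    and init: "\<And>j. m - int k \<le> j \<Longrightarrow> j \<le> m \<Longrightarrow> x (of_int j * h) = \<zeta> j"
    and mismatch: "\<And>n s. m \<le> n \<Longrightarrow> n < m + int N \<Longrightarrow> of_int n * h \<le> s \<Longrightarrow> s \<le> of_int (n + 1) * h
      \<Longrightarrow> \<bar>x (s - r s) - x (of_int (n - int (kn r h n)) * h)\<bar> \<le> \<rho>"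
    and \<rho>: "\<rho> \<ge> 0"
  shows "j \<le> N \<Longrightarrow> m - int k \<le> i \<Longrightarrow> i \<le> m + int j
    \<Longrightarrow> \<bar>x (of_int i * h) - \<zeta> i\<bar> \<le> \<rho> * ((1 + M * h) ^ j - 1)"
proof (induction j arbitrary: i)
  case 0
  then show ?case using init[of i] by simp
next
  case (Suc j)
  define D where "D = \<rho> * ((1 + M * h) ^ j - 1)"
  have Mh: "0 \<le> M * h" using M_nonneg h by simp
  show ?case
  proof (cases "i \<le> m + int j")
    case True
    then have "\<bar>x (of_int i * h) - \<zeta> i\<bar> \<le> D" using Suc unfolding D_def by auto
    also have "D \<le> \<rho> * ((1 + M * h) ^ Suc j - 1)"
      unfolding D_def using Mh \<rho> by (intro mult_left_mono) (auto intro: power_increasing)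
    finally show ?thesis .
  next
    case False
    define n where "n = m + int j"
    define c where "c = x (of_int (n - int (kn r h n)) * h)"
    have i: "i = n + 1" and n: "n \<ge> 0" "n \<ge> m" using False Suc.prems m unfolding n_def by auto
    have IH: "\<bar>x (of_int i' * h) - \<zeta> i'\<bar> \<le> D" if "m - int k \<le> i'" "i' \<le> n" for i'
      using Suc.IH Suc.prems that unfolding n_def D_def by auto
    have D0: "D \<ge> 0" using \<rho> Mh unfolding D_def by simp
    have "n < m + int N" using Suc.prems(1) unfolding n_def by simp
    note mismatch_n = mismatch[OF n(2) this]
    have local: "\<bar>x (of_int (n + 1) * h) - (x (of_int n * h) - dA a h n * c)\<bar> \<le> M * \<rho> * h"
    proof (rule local_step_error[OF h n(1) sol _ \<rho>])
      show "of_int m * h \<le> of_int n * h" using n h by (simp add: mult_right_mono)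
    qed (use mismatch_n in \<open>auto simp: c_def\<close>)
    have current: "\<bar>x (of_int n * h) - \<zeta> n\<bar> \<le> D" using IH[of n] n by simp
    have "\<bar>dA a h n * (c - \<zeta> (n - int (kn r h n)))\<bar> \<le> M * h * D"
      using dA_nonneg[OF h n(1)] dA_le[OF h n(1)] IH[of "n - int (kn r h n)"] kn_bounds(1)[OF h kh n(1)] n(2)
      unfolding c_def by (simp add: abs_mult mult_mono)
    moreover have "x (of_int i * h) - \<zeta> i = (x (of_int n * h) - \<zeta> n)
        + (x (of_int (n + 1) * h) - (x (of_int n * h) - dA a h n * c)) - dA a h n * (c - \<zeta> (n - int (kn r h n)))"
      using rec[OF n(2)] i by (simp add: algebra_simps)
    ultimately have "\<bar>x (of_int i * h) - \<zeta> i\<bar> \<le> D + M * \<rho> * h + M * h * D"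
      using current local by linarith
    also have "\<dots> = \<rho> * ((1 + M * h) ^ Suc j - 1)" unfolding D_def by (simp add: algebra_simps)
    finally show ?thesis .
  qed
qed

lemma zh_at_grid_floor:
  assumes "h > 0"
  shows "zh a r h \<phi> (grid_floor h t) = zeta a r h \<phi> \<lfloor>t / h\<rfloor>"
  using assms unfolding zh_def grid_floor_def Let_def by simp

lemma grid_value_error:
  assumes sol: "dde_sol a r q 0 x" and init: "\<forall>\<theta>\<in>{-q..0}. x \<theta> = \<phi> \<theta>"
    and h: "h > 0" and kh: "real k * h = q" and i: "0 \<le> i" "of_int i * h \<le> t" and \<epsilon>: "\<epsilon> \<ge> 0"
    and x_uc: "\<And>u v. u \<in> {-q..t} \<Longrightarrow> v \<in> {-q..t} \<Longrightarrow> \<bar>u - v\<bar> \<le> 2 * h + w \<Longrightarrow> \<bar>x u - x v\<bar> \<le> \<epsilon>"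
    and r_uc: "\<And>u v. 0 \<le> u \<Longrightarrow> 0 \<le> v \<Longrightarrow> \<bar>u - v\<bar> \<le> h \<Longrightarrow> \<bar>r u - r v\<bar> \<le> w"
  shows "\<bar>x (of_int i * h) - zeta a r h \<phi> i\<bar> \<le> \<epsilon> * exp (M * t)"
proof -
  have "x (of_int j * h) = zeta a r h \<phi> j" if "0 - int k \<le> j" "j \<le> 0" for j
  proof -
    have "- real k * h \<le> of_int j * h" using that h by (intro mult_right_mono) auto
    moreover have "of_int j * h \<le> 0" using that h by (simp add: mult_nonpos_nonneg)
    ultimately show ?thesis using init zeta_initial[OF that(2)] kh by simp
  qed
  moreover have "\<bar>x (s - r s) - x (of_int (n - int (kn r h n)) * h)\<bar> \<le> \<epsilon>"
    if n: "0 \<le> n" "n < 0 + int (nat i)" and s: "of_int n * h \<le> s" "s \<le> of_int (n + 1) * h" for n s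
  proof (rule x_uc)
    have "0 \<le> of_int n * h" using n h by simp
    then have "\<bar>r s - r (of_int n * h)\<bar> \<le> w" using s by (intro r_uc) (auto simp: algebra_simps)
    note approx = delay_grid_approx[OF h kh n(1) s this]
    have "n + 1 \<le> i" using n i(1) by simp
    then have "of_int (n + 1) * h \<le> of_int i * h" using h by (intro mult_right_mono) auto
    then show "s - r s \<in> {-q..t}" "of_int (n - int (kn r h n)) * h \<in> {-q..t}"
      using approx(2,3) delayed_grid_point_bounds[OF h kh n(1)] s i \<open>0 \<le> of_int n * h\<close> by auto
    show "\<bar>(s - r s) - of_int (n - int (kn r h n)) * h\<bar> \<le> 2 * h + w"
      by (rule approx(1))
  qed
  ultimately have "\<bar>x (of_int i * h) - zeta a r h \<phi> i\<bar> \<le> \<epsilon> * ((1 + M * h) ^ nat i - 1)"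
    using discretisation_error[OF h kh order.refl _ _ _ _ \<epsilon>, of x "zeta a r h \<phi>" "nat i" "nat i" i]
      sol zeta_step i by simp
  also have "\<dots> \<le> \<epsilon> * exp (real (nat i) * (M * h))"
    using one_plus_power_le_exp[of "M * h" "nat i"] M_nonneg h \<epsilon> by (simp add: mult_left_mono)
  also have "\<dots> \<le> \<epsilon> * exp (M * t)"
    using i M_nonneg \<epsilon> by (intro mult_left_mono) (auto simp: algebra_simps mult_left_mono)
  finally show ?thesis .
qed

lemma grid_floor_error:
  assumes sol: "dde_sol a r q 0 x" and init: "\<forall>\<theta>\<in>{-q..0}. x \<theta> = \<phi> \<theta>"
    and h: "h > 0" and kh: "real k * h = q" and t: "t > 0" and \<epsilon>: "\<epsilon> \<ge> 0"
    and x_uc: "\<And>u v. u \<in> {-q..t} \<Longrightarrow> v \<in> {-q..t} \<Longrightarrow> \<bar>u - v\<bar> \<le> 2 * h + w \<Longrightarrow> \<bar>x u - x v\<bar> \<le> \<epsilon>"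
    and r_uc: "\<And>u v. 0 \<le> u \<Longrightarrow> 0 \<le> v \<Longrightarrow> \<bar>u - v\<bar> \<le> h \<Longrightarrow> \<bar>r u - r v\<bar> \<le> w"
  shows "\<bar>x t - zh a r h \<phi> (grid_floor h t)\<bar> \<le> \<epsilon> * (1 + exp (M * t))"
proof -
  define i where "i = \<lfloor>t / h\<rfloor>"
  have "of_int i \<le> t / h" "t / h < of_int i + 1" unfolding i_def by linarith+
  then have ih: "of_int i * h \<le> t" "t < of_int i * h + h" using h by (simp_all add: field_simps)
  have i0: "0 \<le> i" using t h unfolding i_def by simp
  have "0 \<le> of_int i * h" "0 \<le> w" using i0 h r_uc[of 0 0] by simp_all
  then have "\<bar>x t - x (of_int i * h)\<bar> \<le> \<epsilon>" using ih t q_pos h by (intro x_uc) auto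
  moreover have "\<bar>x (of_int i * h) - zeta a r h \<phi> i\<bar> \<le> \<epsilon> * exp (M * t)"
    by (rule grid_value_error[OF sol init h kh i0 ih(1) \<epsilon> x_uc r_uc])
  moreover have "zh a r h \<phi> (grid_floor h t) = zeta a r h \<phi> i"
    using zh_at_grid_floor[OF h] unfolding i_def .
  moreover have "\<epsilon> * (1 + exp (M * t)) = \<epsilon> + \<epsilon> * exp (M * t)" by (simp add: algebra_simps)
  ultimately show ?thesis by linarith
qed

lemma grid_error_tendsto:
  assumes sol: "dde_sol a r q 0 x" and init: "\<forall>\<theta>\<in>{-q..0}. x \<theta> = \<phi> \<theta>" and t: "t > 0"
  shows "(\<lambda>k::nat. \<bar>x t - zh a r (q / real k) \<phi> (grid_floor (q / real k) t)\<bar>) \<longlonglongrightarrow> 0"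
proof (rule LIMSEQ_I)
  fix \<epsilon> :: real assume \<epsilon>: "\<epsilon> > 0"
  define E where "E = 1 + exp (M * t)"
  have E: "E > 0" unfolding E_def by (smt (verit) exp_gt_zero)
  define \<epsilon>' where "\<epsilon>' = \<epsilon> / (2 * E)"
  have \<epsilon>': "\<epsilon>' > 0" using \<epsilon> E unfolding \<epsilon>'_def by simp
  have "continuous_on {-q..t} x"
    using sol unfolding dde_sol_def by (auto intro: continuous_on_subset)
  then have "uniformly_continuous_on {-q..t} x"
    by (rule compact_uniformly_continuous[OF _ compact_Icc])
  then obtain d where d: "d > 0"
    and x_uc: "\<And>u v. u \<in> {-q..t} \<Longrightarrow> v \<in> {-q..t} \<Longrightarrow> \<bar>u - v\<bar> < d \<Longrightarrow> \<bar>x u - x v\<bar> < \<epsilon>'"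
    using \<epsilon>' unfolding uniformly_continuous_on_def dist_real_def by metis
  obtain e where e: "e > 0"
    and r_uc: "\<And>u v. u \<in> {0..} \<Longrightarrow> v \<in> {0..} \<Longrightarrow> \<bar>u - v\<bar> < e \<Longrightarrow> \<bar>r u - r v\<bar> < d / 2"
    using r_uniformly_continuous d unfolding uniformly_continuous_on_def dist_real_def
    by (metis half_gt_zero)
  define h\<^sub>0 where "h\<^sub>0 = min e (d / 4)"
  have h\<^sub>0: "h\<^sub>0 > 0" using d e unfolding h\<^sub>0_def by simp
  obtain K :: nat where K: "real K > q / h\<^sub>0" using reals_Archimedean2 by blast
  show "\<exists>K. \<forall>k\<ge>K. norm (\<bar>x t - zh a r (q / real k) \<phi> (grid_floor (q / real k) t)\<bar> - 0) < \<epsilon>"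
  proof (intro exI[of _ "max K 1"] allI impI)
    fix k :: nat assume k: "k \<ge> max K 1"
    have h: "q / real k > 0" and kh: "real k * (q / real k) = q" using q_pos k by auto
    have "real k > q / h\<^sub>0" using K k by simp
    then have "q / real k < h\<^sub>0" using h\<^sub>0 q_pos k by (simp add: field_simps)
    then have he: "q / real k < e" and "q / real k < d / 4" unfolding h\<^sub>0_def by simp_all
    then have hd: "4 * (q / real k) < d" by linarith
    have "\<bar>x t - zh a r (q / real k) \<phi> (grid_floor (q / real k) t)\<bar> \<le> \<epsilon>' * E"
      unfolding E_def
    proof (rule grid_floor_error[OF sol init h kh t less_imp_le[OF \<epsilon>']])
      show "\<bar>x u - x v\<bar> \<le> \<epsilon>'"
        if "u \<in> {-q..t}" "v \<in> {-q..t}" "\<bar>u - v\<bar> \<le> 2 * (q / real k) + d / 2" for u v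
      proof -
        have "\<bar>u - v\<bar> < d" using that(3) hd by linarith
        then show ?thesis using x_uc[OF that(1,2)] by fastforce
      qed
      show "\<bar>r u - r v\<bar> \<le> d / 2" if "0 \<le> u" "0 \<le> v" "\<bar>u - v\<bar> \<le> q / real k" for u v
        using r_uc[of u v] that he by fastforce
    qed
    also have "\<epsilon>' * E = \<epsilon> / 2" unfolding \<epsilon>'_def using E by (simp add: field_simps)
    finally show "norm (\<bar>x t - zh a r (q / real k) \<phi> (grid_floor (q / real k) t)\<bar> - 0) < \<epsilon>"
      using \<epsilon> by simp
  qed
qed

section \<open>Stability of the difference equation\<close>

lemma diff_sol_growth:
  assumes h: "h > 0" and kh: "real k * h = q" and n0: "n0 \<ge> 0"
    and rec: "\<And>n. n \<ge> n0 \<Longrightarrow> \<zeta> (n + 1) = \<zeta> n - dA a h n * \<zeta> (n - int (kn r h n))"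
    and init: "\<And>j. n0 - int k \<le> j \<Longrightarrow> j \<le> n0 \<Longrightarrow> \<bar>\<zeta> j\<bar> \<le> S"
  shows "n0 - int k \<le> n \<Longrightarrow> n \<le> n0 + int j \<Longrightarrow> \<bar>\<zeta> n\<bar> \<le> (1 + M * h) ^ j * S"
proof (induction j arbitrary: n)
  case 0
  then show ?case using init by simp
next
  case (Suc j)
  have Mh: "0 \<le> M * h" using M_nonneg h by simp
  have S: "S \<ge> 0" using init[of n0] by fastforce
  show ?case
  proof (cases "n \<le> n0 + int j")
    case True
    then have "\<bar>\<zeta> n\<bar> \<le> (1 + M * h) ^ j * S" using Suc by simp
    also have "\<dots> \<le> (1 + M * h) ^ Suc j * S" using Mh S by (intro mult_right_mono power_increasing) auto
    finally show ?thesis .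
  next
    case False
    define n' where "n' = n0 + int j"
    have n: "n = n' + 1" and n': "n' \<ge> 0" "n' \<ge> n0" using False Suc.prems n0 unfolding n'_def by auto
    have current: "\<bar>\<zeta> n'\<bar> \<le> (1 + M * h) ^ j * S" using Suc.IH[of n'] unfolding n'_def by simp
    have delayed: "\<bar>\<zeta> (n' - int (kn r h n'))\<bar> \<le> (1 + M * h) ^ j * S"
      using Suc.IH[of "n' - int (kn r h n')"] kn_bounds(1)[OF h kh n'(1)] unfolding n'_def by simp
    have "\<bar>\<zeta> n' - dA a h n' * \<zeta> (n' - int (kn r h n'))\<bar>
        \<le> \<bar>\<zeta> n'\<bar> + \<bar>dA a h n' * \<zeta> (n' - int (kn r h n'))\<bar>"
      by (rule abs_triangle_ineq4)
    then have "\<bar>\<zeta> n\<bar> \<le> \<bar>\<zeta> n'\<bar> + dA a h n' * \<bar>\<zeta> (n' - int (kn r h n'))\<bar>"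
      using rec[OF n'(2)] dA_nonneg[OF h n'(1)] n by (simp add: abs_mult)
    also have "\<dots> \<le> (1 + M * h) ^ j * S + (M * h) * ((1 + M * h) ^ j * S)"
      using current delayed dA_nonneg[OF h n'(1)] dA_le[OF h n'(1)] by (intro add_mono mult_mono) auto
    also have "\<dots> = (1 + M * h) ^ Suc j * S" by (simp add: algebra_simps)
    finally show ?thesis .
  qed
qed

lemma lipschitz_grid_error:
  assumes h: "h > 0" and kh: "real k * h = q" and m: "m \<ge> 0"
    and sol: "dde_sol a r q (of_int m * h) x" and lip: "\<Lambda>-lipschitz_on {of_int m * h - q..} x"
    and rec: "\<And>n. n \<ge> m \<Longrightarrow> \<zeta> (n + 1) = \<zeta> n - dA a h n * \<zeta> (n - int (kn r h n))"
    and init: "\<And>j. m - int k \<le> j \<Longrightarrow> j \<le> m \<Longrightarrow> x (of_int j * h) = \<zeta> j"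
    and r_uc: "\<And>u v. 0 \<le> u \<Longrightarrow> 0 \<le> v \<Longrightarrow> \<bar>u - v\<bar> \<le> h \<Longrightarrow> \<bar>r u - r v\<bar> \<le> w"
    and n: "m \<le> n" "n \<le> m + int N"
  shows "\<bar>x (of_int n * h) - \<zeta> n\<bar> \<le> \<Lambda> * (2 * h + w) * exp (M * (real N * h))"
proof -
  have \<Lambda>: "\<Lambda> \<ge> 0" using lipschitz_on_nonneg[OF lip] .
  have w: "w \<ge> 0" using r_uc[of 0 0] h by simp
  have "\<bar>x (s - r s) - x (of_int (i - int (kn r h i)) * h)\<bar> \<le> \<Lambda> * (2 * h + w)"
    if i: "m \<le> i" "i < m + int N" and s: "of_int i * h \<le> s" "s \<le> of_int (i + 1) * h" for i s
  proof -
    have i0: "i \<ge> 0" using i m by simp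
    have ih0: "0 \<le> of_int i * h" using i0 h by simp
    have "\<bar>r s - r (of_int i * h)\<bar> \<le> w" using s ih0 by (intro r_uc) (auto simp: algebra_simps)
    note approx = delay_grid_approx[OF h kh i0 s this]
    have "of_int m * h \<le> of_int i * h" using i h by (intro mult_right_mono) auto
    then have "s - r s \<in> {of_int m * h - q..}" "of_int (i - int (kn r h i)) * h \<in> {of_int m * h - q..}"
      using approx(2) delayed_grid_point_bounds(1)[OF h kh i0] by auto
    from lipschitz_onD[OF lip this]
    have "\<bar>x (s - r s) - x (of_int (i - int (kn r h i)) * h)\<bar>
        \<le> \<Lambda> * \<bar>(s - r s) - of_int (i - int (kn r h i)) * h\<bar>"
      by (simp add: dist_real_def)
    also have "\<dots> \<le> \<Lambda> * (2 * h + w)" using approx(1) \<Lambda> by (intro mult_left_mono)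
    finally show ?thesis .
  qed
  then have "\<bar>x (of_int n * h) - \<zeta> n\<bar> \<le> \<Lambda> * (2 * h + w) * ((1 + M * h) ^ nat (n - m) - 1)"
    using n discretisation_error[OF h kh m sol rec init _ _, of N "\<Lambda> * (2 * h + w)" "nat (n - m)" n] \<Lambda> w h
    by simp
  also have "\<dots> \<le> \<Lambda> * (2 * h + w) * exp (real (nat (n - m)) * (M * h))"
    using one_plus_power_le_exp[of "M * h" "nat (n - m)"] M_nonneg h \<Lambda> w by (simp add: mult_left_mono)
  also have "\<dots> \<le> \<Lambda> * (2 * h + w) * exp (M * (real N * h))"
  proof -
    have "real (nat (n - m)) \<le> real N" using n by simp
    from mult_right_mono[OF this, of "M * h"]
    have "exp (real (nat (n - m)) * (M * h)) \<le> exp (M * (real N * h))"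
      using M_nonneg h by (simp add: algebra_simps)
    then show ?thesis using \<Lambda> w h by (intro mult_left_mono) auto
  qed
  finally show ?thesis .
qed

lemma interpolated_solution:
  assumes h: "h > 0" and kh: "real k * h = q" and n0: "n0 \<ge> 0"
    and rec: "\<And>n. n \<ge> n0 \<Longrightarrow> \<zeta> (n + 1) = \<zeta> n - dA a h n * \<zeta> (n - int (kn r h n))"
    and m: "m \<ge> n0 + int k"
    and S: "\<And>j. m - 2 * int k \<le> j \<Longrightarrow> j \<le> m \<Longrightarrow> \<bar>\<zeta> j\<bar> \<le> S"
  obtains x where "dde_sol a r q (of_int m * h) x"
    and "\<And>j. m - int k \<le> j \<Longrightarrow> j \<le> m \<Longrightarrow> x (of_int j * h) = \<zeta> j"
    and "\<And>\<theta>. \<theta> \<in> {of_int m * h - q..of_int m * h} \<Longrightarrow> \<bar>x \<theta>\<bar> \<le> S"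
    and "(M * S)-lipschitz_on {of_int m * h - q..of_int m * h} x"
proof -
  have k: "k \<ge> 1" using kh q_pos by (cases k) auto
  have window: "{of_int m * h - q..of_int m * h} = {of_int (m - int k) * h .. of_int m * h}"
    using kh by (simp add: algebra_simps)
  have S0: "S \<ge> 0" using S[of m] k by fastforce
  have "\<bar>\<zeta> (j + 1) - \<zeta> j\<bar> \<le> (M * S) * h" if j: "m - int k \<le> j" "j < m" for j
  proof -
    have j0: "j \<ge> n0" "j \<ge> 0" using j m n0 by auto
    have "\<bar>\<zeta> (j + 1) - \<zeta> j\<bar> = dA a h j * \<bar>\<zeta> (j - int (kn r h j))\<bar>"
      using rec[OF j0(1)] dA_nonneg[OF h j0(2)] by (simp add: abs_mult)
    also have "\<dots> \<le> (M * h) * S"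
      using dA_nonneg[OF h j0(2)] dA_le[OF h j0(2)] S[of "j - int (kn r h j)"] j kn_bounds(1)[OF h kh j0(2)]
      by (intro mult_mono) auto
    finally show ?thesis by (simp add: algebra_simps)
  qed
  then have lip: "(M * S)-lipschitz_on {of_int m * h - q..of_int m * h} (grid_interp h \<zeta>)"
    unfolding window using M_nonneg S0 by (intro grid_interp_lipschitz[OF h]) auto
  have "m - int k < m" using k by simp
  then have bound: "\<bar>grid_interp h \<zeta> \<theta>\<bar> \<le> S" if "\<theta> \<in> {of_int m * h - q..of_int m * h}" for \<theta>
    using that unfolding window by (intro grid_interp_abs_le[OF h \<open>m - int k < m\<close>]) (auto intro: S)
  have "of_int m * h \<ge> 0" using m n0 h by simp
  then obtain x where sol: "dde_sol a r q (of_int m * h) x"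
    and x: "\<And>\<theta>. \<theta> \<in> {of_int m * h - q..of_int m * h} \<Longrightarrow> x \<theta> = grid_interp h \<zeta> \<theta>"
    using dde_sol_exists lipschitz_on_continuous_on[OF lip] by metis
  show ?thesis
  proof (rule that[OF sol])
    show "x (of_int j * h) = \<zeta> j" if "m - int k \<le> j" "j \<le> m" for j
      using that x[of "of_int j * h"] grid_interp_at_grid[OF h] h unfolding window
      by (simp add: mult_right_mono)
    show "\<bar>x \<theta>\<bar> \<le> S" if "\<theta> \<in> {of_int m * h - q..of_int m * h}" for \<theta>
      using that x bound by simp
    show "(M * S)-lipschitz_on {of_int m * h - q..of_int m * h} x"
      using lip by (rule lipschitz_on_transform) (simp add: x)
  qed
qed

end

lemma int_block_cover:
  fixes m n :: int and N i :: nat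
  assumes N: "N > 0" and n: "n \<ge> m + int (i * N)"
  obtains j where "i \<le> j" "m + int (j * N) \<le> n" "n \<le> m + int (j * N) + int N"
proof -
  define j where "j = nat ((n - m) div int N)"
  have "int (i * N) div int N \<le> (n - m) div int N" using n N by (intro zdiv_mono1) auto
  then have i: "int i \<le> (n - m) div int N" using N by simp
  have division: "n - m = (n - m) div int N * int N + (n - m) mod int N" by simp
  have remainder: "0 \<le> (n - m) mod int N" "(n - m) mod int N < int N" using N by auto
  have jN: "int (j * N) = (n - m) div int N * int N" using i unfolding j_def by simp
  show ?thesis
  proof (rule that[of j])
    show "i \<le> j" using i unfolding j_def by simp
    show "m + int (j * N) \<le> n" "n \<le> m + int (j * N) + int N"
      using division remainder jN by linarith+
  qed
qed

lemma diff_UAS_of_geometric_decay: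
  assumes K: "K > 0"
    and bound: "\<And>\<zeta> n0 S n. diff_sol a r h n0 \<zeta> \<Longrightarrow> n0 \<ge> 0 \<Longrightarrow> S > 0 \<Longrightarrow>
      \<forall>j\<in>{n0 - int k..n0}. \<bar>\<zeta> j\<bar> \<le> S \<Longrightarrow> n \<ge> n0 \<Longrightarrow> \<bar>\<zeta> n\<bar> \<le> K * S"
    and decay: "\<And>\<zeta> n0 S i n. diff_sol a r h n0 \<zeta> \<Longrightarrow> n0 \<ge> 0 \<Longrightarrow> S > 0 \<Longrightarrow>
      \<forall>j\<in>{n0 - int k..n0}. \<bar>\<zeta> j\<bar> \<le> S \<Longrightarrow> n \<ge> n0 + int P + int (i * N) \<Longrightarrow> \<bar>\<zeta> n\<bar> \<le> K * S / 2 ^ i"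
  shows "diff_UAS a r h k"
  unfolding diff_UAS_def
proof (intro conjI allI impI)
  fix \<epsilon> :: real assume \<epsilon>: "\<epsilon> > 0"
  show "\<exists>\<delta>>0. \<forall>n0\<ge>0. \<forall>\<zeta>. diff_sol a r h n0 \<zeta> \<and> (\<forall>j\<in>{n0 - int k..n0}. \<bar>\<zeta> j\<bar> < \<delta>)
      \<longrightarrow> (\<forall>n\<ge>n0. \<bar>\<zeta> n\<bar> < \<epsilon>)"
  proof (intro exI[of _ "\<epsilon> / (2 * K)"] conjI allI impI)
    show "\<epsilon> / (2 * K) > 0" using \<epsilon> K by simp
    fix n0 :: int and \<zeta> and n :: int
    assume "n0 \<ge> 0" "diff_sol a r h n0 \<zeta> \<and> (\<forall>j\<in>{n0 - int k..n0}. \<bar>\<zeta> j\<bar> < \<epsilon> / (2 * K))" "n \<ge> n0"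
    then have "\<bar>\<zeta> n\<bar> \<le> K * (\<epsilon> / (2 * K))"
      using \<epsilon> K by (intro bound) (auto simp: less_imp_le)
    also have "\<dots> < \<epsilon>" using K \<epsilon> by simp
    finally show "\<bar>\<zeta> n\<bar> < \<epsilon>" .
  qed
next
  show "\<exists>\<delta>0>0. \<forall>\<eta>>0. \<exists>N'::int. \<forall>n0\<ge>0. \<forall>\<zeta>. diff_sol a r h n0 \<zeta> \<and> (\<forall>j\<in>{n0 - int k..n0}. \<bar>\<zeta> j\<bar> < \<delta>0)
      \<longrightarrow> (\<forall>n\<ge>n0 + N'. \<bar>\<zeta> n\<bar> < \<eta>)"
  proof (intro exI[of _ "1::real"] conjI allI impI)
    fix \<eta> :: real assume \<eta>: "\<eta> > 0"
    obtain i :: nat where "K / \<eta> < 2 ^ i" using real_arch_pow[of 2 "K / \<eta>"] by auto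
    then have i: "K / 2 ^ i < \<eta>" using \<eta> by (simp add: field_simps)
    show "\<exists>N'::int. \<forall>n0\<ge>0. \<forall>\<zeta>. diff_sol a r h n0 \<zeta> \<and> (\<forall>j\<in>{n0 - int k..n0}. \<bar>\<zeta> j\<bar> < 1)
        \<longrightarrow> (\<forall>n\<ge>n0 + N'. \<bar>\<zeta> n\<bar> < \<eta>)"
    proof (intro exI[of _ "int P + int (i * N)"] allI impI)
      fix n0 :: int and \<zeta> and n :: int
      assume "n0 \<ge> 0" "diff_sol a r h n0 \<zeta> \<and> (\<forall>j\<in>{n0 - int k..n0}. \<bar>\<zeta> j\<bar> < 1)"
        "n \<ge> n0 + (int P + int (i * N))"
      then have "\<bar>\<zeta> n\<bar> \<le> K * 1 / 2 ^ i" by (intro decay) (auto simp: less_imp_le add.assoc)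
      then show "\<bar>\<zeta> n\<bar> < \<eta>" using i by simp
    qed
  qed simp
qed

locale uas_dde_setting = dde_setting +
  fixes C T :: real
  assumes C: "C \<ge> 1" and T: "T \<ge> 0"
    and uniform_bound: "\<And>\<sigma> x B t. \<sigma> \<ge> 0 \<Longrightarrow> dde_sol a r q \<sigma> x \<Longrightarrow> B > 0 \<Longrightarrow>
      \<forall>\<theta>\<in>{\<sigma> - q..\<sigma>}. \<bar>x \<theta>\<bar> \<le> B \<Longrightarrow> t \<ge> \<sigma> \<Longrightarrow> \<bar>x t\<bar> \<le> C * B"
    and quarter_decay: "\<And>\<sigma> x B t. \<sigma> \<ge> 0 \<Longrightarrow> dde_sol a r q \<sigma> x \<Longrightarrow> B > 0 \<Longrightarrow>
      \<forall>\<theta>\<in>{\<sigma> - q..\<sigma>}. \<bar>x \<theta>\<bar> \<le> B \<Longrightarrow> t \<ge> \<sigma> + T \<Longrightarrow> \<bar>x t\<bar> \<le> B / 4"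
begin

lemma block_length_ge:
  assumes h: "h > 0" and kh: "real k * h = q" and N: "T + 2 * q \<le> real N * h"
  shows "2 * k \<le> N"
proof -
  have "real (2 * k) * h \<le> real N * h" using N T kh by (simp add: algebra_simps)
  then show ?thesis using h by simp
qed

lemma block_halving:
  assumes h: "h > 0" and kh: "real k * h = q" and n0: "n0 \<ge> 0"
    and rec: "\<And>n. n \<ge> n0 \<Longrightarrow> \<zeta> (n + 1) = \<zeta> n - dA a h n * \<zeta> (n - int (kn r h n))"
    and m: "m \<ge> n0 + int k" and S: "S > 0"
    and window: "\<And>j. m - 2 * int k \<le> j \<Longrightarrow> j \<le> m \<Longrightarrow> \<bar>\<zeta> j\<bar> \<le> S"
    and N: "T + 2 * q \<le> real N * h"
    and r_uc: "\<And>u v. 0 \<le> u \<Longrightarrow> 0 \<le> v \<Longrightarrow> \<bar>u - v\<bar> \<le> h \<Longrightarrow> \<bar>r u - r v\<bar> \<le> w"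
    and small: "M * C * (2 * h + w) * exp (M * (real N * h)) \<le> 1 / 4"
  shows "\<And>n. m \<le> n \<Longrightarrow> n \<le> m + int N \<Longrightarrow> \<bar>\<zeta> n\<bar> \<le> (C + 1) * S"
    and "\<And>n. m + int N - 2 * int k \<le> n \<Longrightarrow> n \<le> m + int N \<Longrightarrow> \<bar>\<zeta> n\<bar> \<le> S / 2"
proof -
  define \<sigma> where "\<sigma> = of_int m * h"
  have \<sigma>: "\<sigma> \<ge> 0" using m n0 h unfolding \<sigma>_def by simp
  obtain x where sol: "dde_sol a r q \<sigma> x"
    and init: "\<And>j. m - int k \<le> j \<Longrightarrow> j \<le> m \<Longrightarrow> x (of_int j * h) = \<zeta> j"
    and x_window: "\<And>\<theta>. \<theta> \<in> {\<sigma> - q..\<sigma>} \<Longrightarrow> \<bar>x \<theta>\<bar> \<le> S"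
    and lip_window: "(M * S)-lipschitz_on {\<sigma> - q..\<sigma>} x"
    using interpolated_solution[OF h kh n0 rec m window] unfolding \<sigma>_def by metis
  have CS: "S \<le> C * S" using mult_right_mono[OF C, of S] S by simp
  have x_bound: "\<bar>x t\<bar> \<le> C * S" if "t \<ge> \<sigma> - q" for t
  proof (cases "t \<le> \<sigma>")
    case True
    then show ?thesis using x_window[of t] that CS by auto
  qed (use uniform_bound[OF \<sigma> sol S] x_window in auto)
  have "M * S \<le> M * (C * S)" using CS M_nonneg by (rule mult_left_mono)
  from dde_sol_lipschitz_with_window[OF sol \<sigma> x_bound lip_window this]
  have lip: "(M * (C * S))-lipschitz_on {of_int m * h - q..} x" unfolding \<sigma>_def .
  have error: "\<bar>x (of_int n * h) - \<zeta> n\<bar> \<le> S / 4" if n: "m \<le> n" "n \<le> m + int N" for n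
  proof -
    have "\<bar>x (of_int n * h) - \<zeta> n\<bar> \<le> M * (C * S) * (2 * h + w) * exp (M * (real N * h))"
      using lipschitz_grid_error[OF h kh _ sol[unfolded \<sigma>_def] lip _ init r_uc n] rec m n0 by simp
    also have "\<dots> = S * (M * C * (2 * h + w) * exp (M * (real N * h)))" by (simp add: algebra_simps)
    also have "\<dots> \<le> S * (1 / 4)" using small S by (intro mult_left_mono) auto
    finally show ?thesis by simp
  qed
  show "\<bar>\<zeta> n\<bar> \<le> (C + 1) * S" if n: "m \<le> n" "n \<le> m + int N" for n
  proof -
    have "of_int n * h \<ge> \<sigma>" using n h unfolding \<sigma>_def by (simp add: mult_right_mono)
    then have "\<bar>x (of_int n * h)\<bar> \<le> C * S" using x_bound q_pos by simp
    moreover have "(C + 1) * S = C * S + S" by (simp add: algebra_simps)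
    ultimately show ?thesis using error[OF n] S by linarith
  qed
  show "\<bar>\<zeta> n\<bar> \<le> S / 2" if n: "m + int N - 2 * int k \<le> n" "n \<le> m + int N" for n
  proof -
    have "of_int (m + int N - 2 * int k) * h \<le> of_int n * h" using n h by (simp add: mult_right_mono)
    then have "of_int n * h \<ge> \<sigma> + T" using N kh unfolding \<sigma>_def by (simp add: algebra_simps)
    then have "\<bar>x (of_int n * h)\<bar> \<le> S / 4"
      using quarter_decay[OF \<sigma> sol S] x_window by auto
    moreover have "m \<le> n" using n block_length_ge[OF h kh N] by linarith
    ultimately show ?thesis using error[OF _ n(2)] by linarith
  qed
qed

lemma halving_after_window:
  assumes h: "h > 0" and kh: "real k * h = q" and n0: "n0 \<ge> 0"
    and rec: "\<And>n. n \<ge> n0 \<Longrightarrow> \<zeta> (n + 1) = \<zeta> n - dA a h n * \<zeta> (n - int (kn r h n))"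
    and m: "m \<ge> n0 + int k" and S: "S > 0"
    and window: "\<And>j. m - 2 * int k \<le> j \<Longrightarrow> j \<le> m \<Longrightarrow> \<bar>\<zeta> j\<bar> \<le> S"
    and N: "T + 2 * q \<le> real N * h"
    and r_uc: "\<And>u v. 0 \<le> u \<Longrightarrow> 0 \<le> v \<Longrightarrow> \<bar>u - v\<bar> \<le> h \<Longrightarrow> \<bar>r u - r v\<bar> \<le> w"
    and small: "M * C * (2 * h + w) * exp (M * (real N * h)) \<le> 1 / 4"
    and n: "n \<ge> m + int (i * N)"
  shows "\<bar>\<zeta> n\<bar> \<le> (C + 1) * S / 2 ^ i"
proof -
  have "k \<ge> 1" using kh q_pos by (cases k) auto
  then have N0: "N > 0" using block_length_ge[OF h kh N] by simp
  have windows: "\<bar>\<zeta> j\<bar> \<le> S / 2 ^ i"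
    if "m + int (i * N) - 2 * int k \<le> j" "j \<le> m + int (i * N)" for i j
    using that
  proof (induction i arbitrary: j)
    case 0
    then show ?case using window by simp
  next
    case (Suc i)
    have m': "m + int (i * N) \<ge> n0 + int k" using m of_nat_0_le_iff[of "i * N"] by linarith
    have S': "S / 2 ^ i > 0" using S by simp
    have "\<bar>\<zeta> j\<bar> \<le> (S / 2 ^ i) / 2"
      by (rule block_halving(2)[OF h kh n0 rec m' S' Suc.IH N r_uc small])
        (use Suc.prems in \<open>auto simp: algebra_simps\<close>)
    then show ?case by simp
  qed
  obtain j where j: "i \<le> j" "m + int (j * N) \<le> n" "n \<le> m + int (j * N) + int N"
    using int_block_cover[OF N0 n] .
  have "m + int (j * N) \<ge> n0 + int k" using m of_nat_0_le_iff[of "j * N"] by linarith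
  then have "\<bar>\<zeta> n\<bar> \<le> (C + 1) * (S / 2 ^ j)"
    using block_halving(1)[OF h kh n0 rec _ _ windows N r_uc small, of "m + int (j * N)" j n] j S
    by simp
  also have "\<dots> \<le> (C + 1) * (S / 2 ^ i)"
    using C S j(1) by (intro mult_left_mono divide_left_mono) (auto simp: power_increasing)
  finally show ?thesis by simp
qed

lemma geometric_decay:
  assumes h: "h > 0" and kh: "real k * h = q" and n0: "n0 \<ge> 0"
    and rec: "\<And>n. n \<ge> n0 \<Longrightarrow> \<zeta> (n + 1) = \<zeta> n - dA a h n * \<zeta> (n - int (kn r h n))"
    and S: "S > 0" and init: "\<And>j. n0 - int k \<le> j \<Longrightarrow> j \<le> n0 \<Longrightarrow> \<bar>\<zeta> j\<bar> \<le> S"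
    and N: "T + 2 * q \<le> real N * h"
    and r_uc: "\<And>u v. 0 \<le> u \<Longrightarrow> 0 \<le> v \<Longrightarrow> \<bar>u - v\<bar> \<le> h \<Longrightarrow> \<bar>r u - r v\<bar> \<le> w"
    and small: "M * C * (2 * h + w) * exp (M * (real N * h)) \<le> 1 / 4"
  shows "n \<ge> n0 \<Longrightarrow> \<bar>\<zeta> n\<bar> \<le> (C + 1) * exp (M * q) * S"
    and "n \<ge> n0 + int k + int (i * N) \<Longrightarrow> \<bar>\<zeta> n\<bar> \<le> (C + 1) * exp (M * q) * S / 2 ^ i"
proof -
  define S\<^sub>1 where "S\<^sub>1 = exp (M * q) * S"
  have S\<^sub>1: "S\<^sub>1 > 0" using S unfolding S\<^sub>1_def by simp
  have first_window: "\<bar>\<zeta> n\<bar> \<le> S\<^sub>1" if "n0 - int k \<le> n" "n \<le> n0 + int k" for n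
  proof -
    have "\<bar>\<zeta> n\<bar> \<le> (1 + M * h) ^ k * S"
      using diff_sol_growth[OF h kh n0 rec init that] .
    also have "\<dots> \<le> exp (real k * (M * h)) * S"
      using one_plus_power_le_exp[of "M * h" k] M_nonneg h S by (intro mult_right_mono) auto
    finally show ?thesis using kh unfolding S\<^sub>1_def by (simp add: algebra_simps)
  qed
  have decay: "\<bar>\<zeta> n\<bar> \<le> (C + 1) * S\<^sub>1 / 2 ^ i" if "n \<ge> n0 + int k + int (i * N)" for i n
    by (rule halving_after_window[OF h kh n0 rec order.refl S\<^sub>1 _ N r_uc small that])
      (use first_window in auto)
  show "\<bar>\<zeta> n\<bar> \<le> (C + 1) * exp (M * q) * S / 2 ^ i" if "n \<ge> n0 + int k + int (i * N)"
    using decay[OF that] unfolding S\<^sub>1_def by (simp add: mult.assoc)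
  show "\<bar>\<zeta> n\<bar> \<le> (C + 1) * exp (M * q) * S" if "n \<ge> n0"
  proof (cases "n \<le> n0 + int k")
    case True
    then have "\<bar>\<zeta> n\<bar> \<le> S\<^sub>1" using first_window that by simp
    also have "\<dots> \<le> (C + 1) * S\<^sub>1" using C S\<^sub>1 by simp
    finally show ?thesis unfolding S\<^sub>1_def by (simp add: mult.assoc)
  next
    case False
    then show ?thesis using decay[of 0 n] unfolding S\<^sub>1_def by (simp add: mult.assoc)
  qed
qed

lemma diff_UAS_of_small_step:
  assumes h: "h > 0" and kh: "real k * h = q"
    and r_uc: "\<And>u v. 0 \<le> u \<Longrightarrow> 0 \<le> v \<Longrightarrow> \<bar>u - v\<bar> \<le> h \<Longrightarrow> \<bar>r u - r v\<bar> \<le> w"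
    and small: "M * C * (2 * h + w) * exp (M * (3 * q + T)) \<le> 1 / 4"
  shows "diff_UAS a r h k"
proof -
  define N where "N = 2 * k + nat \<lceil>T / h\<rceil>"
  have ceil: "T \<le> of_int \<lceil>T / h\<rceil> * h" "of_int \<lceil>T / h\<rceil> * h \<le> T + h"
    using h mult_right_mono[OF le_of_int_ceiling[of "T / h"], of h]
      mult_right_mono[OF of_int_ceiling_le_add_one[of "T / h"], of h]
    by (simp_all add: algebra_simps)
  have "real N * h = 2 * q + of_int \<lceil>T / h\<rceil> * h"
    using T h kh unfolding N_def by (simp add: algebra_simps)
  moreover have "h \<le> q" using kh h q_pos by (cases k) (auto simp: algebra_simps)
  ultimately have N: "T + 2 * q \<le> real N * h" and N': "real N * h \<le> 3 * q + T" using ceil by auto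
  have "M * C * (2 * h + w) * exp (M * (real N * h)) \<le> M * C * (2 * h + w) * exp (M * (3 * q + T))"
    using M_nonneg C h r_uc[of 0 0] N' by (intro mult_left_mono) (auto intro!: mult_left_mono)
  then have small_N: "M * C * (2 * h + w) * exp (M * (real N * h)) \<le> 1 / 4" using small by simp
  show ?thesis
    by (rule diff_UAS_of_geometric_decay[of "(C + 1) * exp (M * q)" a r h k k N])
      (use C geometric_decay[OF h kh _ _ _ _ N r_uc small_N] in \<open>auto simp: diff_sol_def\<close>)
qed

lemma eventually_diff_UAS: "\<exists>K. \<forall>k\<ge>K. k \<ge> 1 \<and> diff_UAS a r (q / real k) k"
proof -
  define P where "P = M * C * exp (M * (3 * q + T))"
  have P: "P \<ge> 0" using M_nonneg C unfolding P_def by simp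
  define w where "w = 1 / (16 * (P + 1))"
  have w: "w > 0" using P unfolding w_def by simp
  obtain d where d: "d > 0"
    and r_uc: "\<And>u v. u \<in> {0..} \<Longrightarrow> v \<in> {0..} \<Longrightarrow> dist u v < d \<Longrightarrow> dist (r u) (r v) < w"
    using r_uniformly_continuous w unfolding uniformly_continuous_on_def by metis
  define h\<^sub>0 where "h\<^sub>0 = min d (w / 2)"
  have h\<^sub>0: "h\<^sub>0 > 0" using d w unfolding h\<^sub>0_def by simp
  obtain K :: nat where K: "real K > q / h\<^sub>0" using reals_Archimedean2 by blast
  have "diff_UAS a r (q / real k) k" if k: "k \<ge> max K 1" for k
  proof (rule diff_UAS_of_small_step)
    have "real k > q / h\<^sub>0" using K k by simp
    then have "q / real k < h\<^sub>0" using h\<^sub>0 q_pos k by (simp add: field_simps)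
    then have hd: "q / real k < d" and hw: "q / real k < w / 2" unfolding h\<^sub>0_def by auto
    show "q / real k > 0" "real k * (q / real k) = q" using q_pos k by auto
    show "\<bar>r u - r v\<bar> \<le> w" if "0 \<le> u" "0 \<le> v" "\<bar>u - v\<bar> \<le> q / real k" for u v
      using r_uc[of u v] that hd by (simp add: dist_real_def)
    have "M * C * (2 * (q / real k) + w) * exp (M * (3 * q + T)) = P * (2 * (q / real k) + w)"
      unfolding P_def by (simp add: algebra_simps)
    also have "\<dots> \<le> (P + 1) * (2 * w)"
    proof (rule mult_mono)
      have "0 \<le> q / real k" using q_pos by simp
      then show "2 * (q / real k) + w \<le> 2 * w" "0 \<le> 2 * (q / real k) + w" using hw w by linarith+
    qed (use P in auto)
    also have "\<dots> = 1 / 8" unfolding w_def using P by simp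
    finally show "M * C * (2 * (q / real k) + w) * exp (M * (3 * q + T)) \<le> 1 / 4" by linarith
  qed
  then show ?thesis by (intro exI[of _ "max K 1"]) auto
qed

end

theorem corollary4p2:
  fixes a r :: "real \<Rightarrow> real" and q :: real
  assumes q_pos: "q > 0"
    and a_cont: "continuous_on {0..} a"
    and a_nonneg: "\<forall>t\<ge>0. a t \<ge> 0"
    and r_range: "\<forall>t\<ge>0. 0 \<le> r t \<and> r t \<le> q"
    and q_sup: "q = (SUP t\<in>{0..}. r t)"
    and A1: "dde_UAS a r q"
    and A2: "\<exists>M. \<forall>t\<ge>0. \<bar>a t\<bar> \<le> M"
    and A3: "uniformly_continuous_on {0..} r"
  shows "(\<forall>\<phi> x. continuous_on {-q..0} \<phi> \<and> dde_sol a r q 0 x \<and> (\<forall>\<theta>\<in>{-q..0}. x \<theta> = \<phi> \<theta>) \<longrightarrow>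
            (\<forall>t>0. (\<lambda>k::nat. \<bar>x t - zh a r (q / real k) \<phi> (grid_floor (q / real k) t)\<bar>)
                     \<longlonglongrightarrow> 0))
       \<and> (\<exists>K::nat. \<forall>k\<ge>K. k \<ge> 1 \<and> diff_UAS a r (q / real k) k)"
proof -
  obtain M where M: "\<forall>t\<ge>0. \<bar>a t\<bar> \<le> M" using A2 by blast
  interpret dde_setting a r q M
    by unfold_locales (use q_pos a_cont a_nonneg r_range M A3 in \<open>auto simp: abs_le_iff\<close>)
  obtain C where "C \<ge> 1" and "\<And>\<sigma> x B t. \<sigma> \<ge> 0 \<Longrightarrow> dde_sol a r q \<sigma> x \<Longrightarrow> B > 0 \<Longrightarrow>
      \<forall>\<theta>\<in>{\<sigma> - q..\<sigma>}. \<bar>x \<theta>\<bar> \<le> B \<Longrightarrow> t \<ge> \<sigma> \<Longrightarrow> \<bar>x t\<bar> \<le> C * B"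
    using dde_UAS_linear_bound[OF A1] by blast
  moreover obtain T where "T \<ge> 0" and "\<And>\<sigma> x B t. \<sigma> \<ge> 0 \<Longrightarrow> dde_sol a r q \<sigma> x \<Longrightarrow> B > 0 \<Longrightarrow>
      \<forall>\<theta>\<in>{\<sigma> - q..\<sigma>}. \<bar>x \<theta>\<bar> \<le> B \<Longrightarrow> t \<ge> \<sigma> + T \<Longrightarrow> \<bar>x t\<bar> \<le> B / 4"
    using dde_UAS_quarter_decay[OF A1] by blast
  ultimately interpret uas_dde_setting a r q M C T
    by unfold_locales blast+
  show ?thesis using grid_error_tendsto eventually_diff_UAS by blast
qed

end
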